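(* Let $h\in\mathfrak M$ and $\delta\in\{\ast,0,\gamma^{(H)}\}$ with $t\in\mathbb T_\delta$. Let $\mathcal A_h\oplus\mathcal A_{\mu(h)}$ be a non-degenerate $\mathcal K_h\oplus\mathcal K_{\mu(h)}$-submodule of $\mathcal J_h\oplus\mathcal J_{\mu(h)}$, where $\mathcal A_h$ is a $\mathcal K_h$-subspace of $\mathcal J_h$ of dimension $\ell$ and $\mathcal A_{\mu(h)}$ is a $\mathcal K_{\mu(h)}$-subspace of $\mathcal J_{\mu(h)}$ of dimension $r$. Then: (a) if $\ell=1$ or $r=1$, there is no non-trivial isotropic element in $\mathcal A_h\oplus\mathcal A_{\mu(h)}$; (b) if $\ell,r\ge2$, there exists a non-trivial isotropic element in $\mathcal A_h\oplus\mathcal A_{\mu(h)}$; (c) if $\ell,r\ge2$, there exists a hyperbolic pair in $\mathcal A_h\oplus\mathcal A_{\mu(h)}$; (d) the $\mathcal K_h\oplus\mathcal K_{\mu(h)}$-submodule of $\mathcal A_h\oplus\mathcal A_{\mu(h)}$ generated by any hyperbolic pair is non-degenerate.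
   Context: Standing setup. Let $q$ be a power of a prime $p$, $n\ge1$ with $\gcd(n,q)=1$, $t\ge2$. $\mathcal R_n^{(q)}=\mathbb F_q[X]/\langle X^n-1\rangle\subseteq\mathcal R_n^{(q^t)}=\mathbb F_{q^t}[X]/\langle X^n-1\rangle$. $C^{(q)}_\ell=\{\ell q^j\bmod n\}$; $\ell_0=0,\dots,\ell_{s-1}$ representatives of the $q$-cyclotomic cosets mod $n$; $d_i=|C^{(q)}_{\ell_i}|$; $f_i(X)=\prod_{k\in C^{(q)}_{\ell_i}}(X-\eta^k)$ for a primitive $n$th root of unity $\eta$. $\mathcal K_i$ is the ideal of $\mathcal R_n^{(q)}$ generated by $(X^n-1)/f_i$ (a field $\cong\mathbb F_{q^{d_i}}$), $\mathcal J_i$ the ideal of $\mathcal R_n^{(q^t)}$ generated by $(X^n-1)/f_i$ (a $t$-dimensional $\mathcal K_i$-space). $\mu$ is the involution of $\{0,\dots,s-1\}$ with $C^{(q)}_{-\ell_i}=C^{(q)}_{\ell_{\mu(i)}}$, and $\mathfrak M$ contains exactly one element of each 2-cycle of $\mu$ (so $d_h=d_{\mu(h)}$). $\tau_{q^u,v}(\sum a_iX^i)=\sum a_i^{q^u}X^{vi}$. Forms: $[a,b]_0=\sum_{w=0}^{t-1}\tau_{q^w,1}(a\tau_{1,-1}(b))$ (any $t\ge2$); $[a,b]_\ast=\sum_{u=0}^{t-1}\tau_{q^u,1}(a\sum_{w=1}^{t-1}\tau_{q^w,-1}(b))$ ($t\not\equiv1\pmod p$); for $t$ even, $t=2^em$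 ($m$ odd), nonzero $\gamma\in\mathbb F_{q^{2^e}}$ with $\gamma+\gamma^{q^{2^{e-1}}}=0$, $[a,b]_\gamma=\sum_{w=0}^{t-1}\tau_{q^w,1}(\gamma a\tau_{q^{t/2},-1}(b))$. $\mathbb T_\ast=\{t\ge2:t\not\equiv1\pmod p\}$, $\mathbb T_0=\{t\ge2\}$, $\mathbb T_{\gamma^{(H)}}=\{t\ge2\text{ even}\}$. Module setup. Fix $h\in\mathfrak M$. $\mathcal J_h\oplus\mathcal J_{\mu(h)}$ is a module over the ring $\mathcal K_h\oplus\mathcal K_{\mu(h)}$ via $(u+v)(a+b)=ua+vb$. For $\delta\in\{\ast,0\}$ use $[\cdot,\cdot]_\delta$ restricted to $\mathcal J_h\oplus\mathcal J_{\mu(h)}$; for $\delta=\gamma^{(H)}$ fix $0\ne\vartheta\in\mathcal K_h$, set $\chi=\vartheta-\tau_{1,-1}(\vartheta)$ and $[x,y]_{\gamma^{(H)}}=\chi[x,y]_\gamma$. For a $\mathcal K_h$-subspace $\mathcal A_h\subseteq\mathcal J_h$ and a $\mathcal K_{\mu(h)}$-subspace $\mathcal A_{\mu(h)}\subseteq\mathcal J_{\mu(h)}$, the submodule $\mathcal A_h\oplus\mathcal A_{\mu(h)}$ (or any submodule) is non-degenerate if no nonzero element of it is $[\cdot,\cdot]_\delta$-orthogonal to all of it. A nonzero element $x$ is isotropic if $[x,x]_\delta=0$; an element $a+b$ ($a\in\mathcal J_h$, $b\in\mathcal J_{\mu(h)}$) is non-trivial if $a\ne0$ and $b\ne0$.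 Two non-trivial isotropic elements $x,y$ form a hyperbolic pair if $[x,y]_\delta=e_h+e_{\mu(h)}$, where $e_h,e_{\mu(h)}$ are the identities of $\mathcal K_h,\mathcal K_{\mu(h)}$. *)

theory Defs
  imports "HOL-Computational_Algebra.Computational_Algebra"
begin

text \<open>All fields are realised as subfields of one ambient finite field 'a,
which is large enough to contain F_(q^t) and a primitive n-th root of unity.\<close>

text \<open>The subfield of 'a of order m (when it exists): fixed points of x -> x^m.\<close>
definition subF :: "nat \<Rightarrow> ('a::{field,finite}) set" where
  "subF m = {x. x ^ m = x}"

definition xn1 :: "nat \<Rightarrow> ('a::field) poly" where
  "xn1 n = monom 1 n - 1"

text \<open>R_n over the subfield S: polynomials of degree < n with coefficients in S,
  i.e. canonical representatives of S[X]/(X^n-1).\<close>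
definition Rn :: "('a::field) set \<Rightarrow> nat \<Rightarrow> 'a poly set" where
  "Rn S n = {a. degree a < n \<and> (\<forall>i. coeff a i \<in> S)}"

definition rmul :: "nat \<Rightarrow> ('a::field) poly \<Rightarrow> 'a poly \<Rightarrow> 'a poly" where
  "rmul n a b = (a * b) mod xn1 n"

text \<open>tau_(e,v)(sum a_i X^i) = sum a_i^e X^(v i mod n); e is the exponent q^u.\<close>
definition tau :: "nat \<Rightarrow> nat \<Rightarrow> int \<Rightarrow> ('a::field) poly \<Rightarrow> 'a poly" where
  "tau n e v a = (\<Sum>i<n. monom (coeff a i ^ e) (nat ((v * int i) mod int n)))"

definition cyc_coset :: "nat \<Rightarrow> nat \<Rightarrow> nat \<Rightarrow> nat set" where
  "cyc_coset n q l = {(l * q ^ j) mod n | j. True}"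

definition negmod :: "nat \<Rightarrow> nat \<Rightarrow> nat" where
  "negmod n l = (n - l mod n) mod n"

definition fpoly :: "('a::field) \<Rightarrow> nat set \<Rightarrow> 'a poly" where
  "fpoly \<eta> C = (\<Prod>k\<in>C. [:- (\<eta> ^ k), 1:])"

definition primitive_root :: "nat \<Rightarrow> ('a::field) \<Rightarrow> bool" where
  "primitive_root n \<eta> \<longleftrightarrow> \<eta> ^ n = 1 \<and> (\<forall>k. 0 < k \<and> k < n \<longrightarrow> \<eta> ^ k \<noteq> 1)"

definition gen_ideal :: "('a::field) set \<Rightarrow> nat \<Rightarrow> 'a poly \<Rightarrow> 'a poly set" where
  "gen_ideal S n g = {rmul n g a | a. a \<in> Rn S n}"

definition ident :: "nat \<Rightarrow> ('a::field) poly set \<Rightarrow> 'a poly" where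
  "ident n K = (THE e. e \<in> K \<and> (\<forall>u\<in>K. rmul n e u = u))"

definition ksubspace :: "nat \<Rightarrow> ('a::field) poly set \<Rightarrow> 'a poly set \<Rightarrow> 'a poly set \<Rightarrow> bool" where
  "ksubspace n K J A \<longleftrightarrow> A \<subseteq> J \<and> 0 \<in> A \<and> (\<forall>x\<in>A. \<forall>y\<in>A. x + y \<in> A)
     \<and> (\<forall>u\<in>K. \<forall>x\<in>A. rmul n u x \<in> A)"

definition kdim :: "nat \<Rightarrow> ('a::field) poly set \<Rightarrow> 'a poly set \<Rightarrow> nat \<Rightarrow> bool" where
  "kdim n K A d \<longleftrightarrow> (\<exists>b. (\<forall>i<d. b i \<in> A)
     \<and> (\<forall>c. (\<forall>i<d. c i \<in> K) \<longrightarrow> (\<Sum>i<d. rmul n (c i) (b i)) = 0 \<longrightarrow> (\<forall>i<d. c i = 0))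
     \<and> A = {(\<Sum>i<d. rmul n (c i) (b i)) | c. \<forall>i<d. c i \<in> K})"

definition form0 :: "nat \<Rightarrow> nat \<Rightarrow> nat \<Rightarrow> ('a::field) poly \<Rightarrow> 'a poly \<Rightarrow> 'a poly" where
  "form0 n q t a b = (\<Sum>w<t. tau n (q ^ w) 1 (rmul n a (tau n 1 (-1) b)))"

definition form_star :: "nat \<Rightarrow> nat \<Rightarrow> nat \<Rightarrow> ('a::field) poly \<Rightarrow> 'a poly \<Rightarrow> 'a poly" where
  "form_star n q t a b =
     (\<Sum>u<t. tau n (q ^ u) 1 (rmul n a (\<Sum>w\<in>{1..<t}. tau n (q ^ w) (-1) b)))"

definition form_gamma :: "nat \<Rightarrow> nat \<Rightarrow> nat \<Rightarrow> 'a \<Rightarrow> ('a::field) poly \<Rightarrow> 'a poly \<Rightarrow> 'a poly" where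
  "form_gamma n q t \<gamma> a b =
     (\<Sum>w<t. tau n (q ^ w) 1 (rmul n (smult \<gamma> a) (tau n (q ^ (t div 2)) (-1) b)))"

definition form_gammaH :: "nat \<Rightarrow> nat \<Rightarrow> nat \<Rightarrow> 'a \<Rightarrow> ('a::field) poly \<Rightarrow> 'a poly \<Rightarrow> 'a poly \<Rightarrow> 'a poly" where
  "form_gammaH n q t \<gamma> \<theta> a b = rmul n (\<theta> - tau n 1 (-1) \<theta>) (form_gamma n q t \<gamma> a b)"

datatype delta = DStar | DZero | DGammaH

definition form_delta :: "delta \<Rightarrow> nat \<Rightarrow> nat \<Rightarrow> nat \<Rightarrow> 'a \<Rightarrow> ('a::field) poly \<Rightarrow> 'a poly \<Rightarrow> 'a poly \<Rightarrow> 'a poly" where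
  "form_delta \<delta> n q t \<gamma> \<theta> = (case \<delta> of DStar \<Rightarrow> form_star n q t | DZero \<Rightarrow> form0 n q t
      | DGammaH \<Rightarrow> form_gammaH n q t \<gamma> \<theta>)"

text \<open>the sets T_delta (p the characteristic)\<close>
definition Tset :: "delta \<Rightarrow> nat \<Rightarrow> nat set" where
  "Tset \<delta> p = (case \<delta> of DStar \<Rightarrow> {t. t \<ge> 2 \<and> t mod p \<noteq> 1 mod p} | DZero \<Rightarrow> {t. t \<ge> 2}
      | DGammaH \<Rightarrow> {t. t \<ge> 2 \<and> even t})"

definition nondeg :: "('a poly \<Rightarrow> 'a poly \<Rightarrow> ('a::field) poly) \<Rightarrow> 'a poly set \<Rightarrow> bool" where
  "nondeg B N \<longleftrightarrow> (\<forall>x\<in>N. x \<noteq> 0 \<longrightarrow> (\<exists>y\<in>N. B x y \<noteq> 0))"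

definition isotropic :: "('a poly \<Rightarrow> 'a poly \<Rightarrow> ('a::field) poly) \<Rightarrow> 'a poly \<Rightarrow> bool" where
  "isotropic B x \<longleftrightarrow> x \<noteq> 0 \<and> B x x = 0"

definition nontrivial :: "('a::field) poly set \<Rightarrow> 'a poly set \<Rightarrow> 'a poly \<Rightarrow> bool" where
  "nontrivial A1 A2 x \<longleftrightarrow> (\<exists>a\<in>A1. \<exists>b\<in>A2. x = a + b \<and> a \<noteq> 0 \<and> b \<noteq> 0)"

definition dsum :: "('a::field) poly set \<Rightarrow> 'a poly set \<Rightarrow> 'a poly set" where
  "dsum A1 A2 = {a + b | a b. a \<in> A1 \<and> b \<in> A2}"

definition hyperbolic_pair ::
  "nat \<Rightarrow> ('a poly \<Rightarrow> 'a poly \<Rightarrow> ('a::field) poly) \<Rightarrow> 'a poly set \<Rightarrow> 'a poly set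
     \<Rightarrow> 'a poly set \<Rightarrow> 'a poly set \<Rightarrow> 'a poly \<Rightarrow> 'a poly \<Rightarrow> bool" where
  "hyperbolic_pair n B K1 K2 A1 A2 x y \<longleftrightarrow>
     nontrivial A1 A2 x \<and> isotropic B x \<and> nontrivial A1 A2 y \<and> isotropic B y
     \<and> B x y = ident n K1 + ident n K2"

definition gen_submod :: "nat \<Rightarrow> ('a::field) poly set \<Rightarrow> 'a poly set \<Rightarrow> 'a poly \<Rightarrow> 'a poly \<Rightarrow> 'a poly set" where
  "gen_submod n K1 K2 x y = {rmul n (u + v) x + rmul n (u' + v') y | u v u' v'.
       u \<in> K1 \<and> v \<in> K2 \<and> u' \<in> K1 \<and> v' \<in> K2}"

definition Kideal :: "('a::{field,finite}) \<Rightarrow> nat \<Rightarrow> nat \<Rightarrow> nat \<Rightarrow> 'a poly set" where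
  "Kideal \<eta> n q l = gen_ideal (subF q) n (xn1 n div fpoly \<eta> (cyc_coset n q l))"

definition Jideal :: "('a::{field,finite}) \<Rightarrow> nat \<Rightarrow> nat \<Rightarrow> nat \<Rightarrow> nat \<Rightarrow> 'a poly set" where
  "Jideal \<eta> n q t l = gen_ideal (subF (q ^ t)) n (xn1 n div fpoly \<eta> (cyc_coset n q l))"

end

theory Submission
  imports Defs "HOL-Number_Theory.Cong"
begin

text \<open>Evaluation at the powers of \<open>\<eta>\<close> (the discrete Fourier transform \<open>dft\<close>) identifies
  \<open>R_n\<close> with functions on \<open>\<int>/n\<close>: multiplication becomes pointwise, \<open>\<tau>_(1,-1)\<close> becomes
  \<open>z \<mapsto> -z\<close> and the Frobenius \<open>\<tau>_(q,1)\<close> becomes \<open>z \<mapsto> qz\<close> followed by a \<open>q\<close>-th power.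
  Hence \<open>K_l\<close> and \<open>J_l\<close> consist of the elements supported on the coset \<open>C_l\<close>, and since
  \<open>C_h\<close> and \<open>C_(-h)\<close> are disjoint, all three forms vanish on \<open>J_h \<times> J_h\<close> and on
  \<open>J_(\<mu>(h)) \<times> J_(\<mu>(h))\<close>, take values in \<open>K_h\<close> on \<open>J_h \<times> J_(\<mu>(h))\<close>, and satisfy
  \<open>[b, a] = \<tau>_(1,-1)[a, b]\<close>. On \<open>A_h \<oplus> A_(\<mu>(h))\<close> the form is therefore a non-degenerate pairing
  of \<open>A_h\<close> with \<open>A_(\<mu>(h))\<close> over the field \<open>K_h\<close>, and \<open>a + b\<close> is isotropic iff \<open>[a, b] = 0\<close>.
  Then (a) holds because a non-zero vector spans a one-dimensional space, (b) because a
  linear form on a space of dimension at least two has a non-zero kernel, (c) by completing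
  an isotropic vector to a hyperbolic pair by one Gram--Schmidt step, and (d) because the
  Gram matrix of a hyperbolic pair is invertible over \<open>K_h \<oplus> K_(\<mu>(h))\<close>.\<close>

lemma of_nat_card_UNIV_eq_0: "of_nat (card (UNIV :: 'a::{ring_1,finite} set)) = (0::'a)"
proof -
  have bij: "bij_betw (\<lambda>y. 1 + y) (UNIV::'a set) UNIV"
    by (rule bij_betwI[where g="\<lambda>y. y - 1"]) auto
  have "(\<Sum>y\<in>(UNIV::'a set). 1 + y) = (\<Sum>y\<in>UNIV. y)"
    using sum.reindex_bij_betw[OF bij, of "\<lambda>y. y"] by simp
  then have "of_nat (card (UNIV::'a set)) + (\<Sum>y\<in>(UNIV::'a set). y) = (\<Sum>y\<in>UNIV. y)"
    by (simp add: sum.distrib)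
  then show ?thesis by simp
qed

lemma CHAR_eq_if_card_eq_prime_power:
  assumes "prime p" and "card (UNIV :: 'a::{field,finite} set) = p ^ m"
  shows "CHAR('a) = p"
proof -
  have prime_CHAR: "prime CHAR('a)" by (rule prime_CHAR_semidom[OF finite_imp_CHAR_pos]) simp
  have "CHAR('a) dvd p ^ m"
    using of_nat_card_UNIV_eq_0 of_nat_eq_0_iff_char_dvd assms(2) by metis
  then have "CHAR('a) dvd p" using prime_CHAR prime_dvd_power by blast
  then show ?thesis using prime_CHAR assms(1) by (simp add: primes_dvd_imp_eq)
qed

lemma dsumI: "a \<in> A1 \<Longrightarrow> b \<in> A2 \<Longrightarrow> a + b \<in> dsum A1 A2"
  unfolding dsum_def by blast

section \<open>Arithmetic modulo \<open>X^n - 1\<close>\<close>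

lemma degree_xn1: "0 < n \<Longrightarrow> degree (xn1 n :: 'a::field poly) = n"
proof -
  assume "0 < n"
  have "degree (xn1 n :: 'a::field poly) \<le> n" unfolding xn1_def
    by (rule degree_diff_le) (auto simp: degree_monom_le)
  moreover have "coeff (xn1 n :: 'a::field poly) n = 1" using \<open>0 < n\<close> by (simp add: xn1_def coeff_monom)
  then have "n \<le> degree (xn1 n :: 'a::field poly)" by (intro le_degree) simp
  ultimately show ?thesis by simp
qed

lemma poly_xn1: "poly (xn1 n) x = (x::'a::field) ^ n - 1" by (simp add: xn1_def poly_monom)

lemma poly_as_sum_lessThan: "degree (a::'a::comm_semiring_1 poly) < n \<Longrightarrow> poly a x = (\<Sum>i<n. coeff a i * x ^ i)"
proof -
  assume d: "degree a < n"
  have "poly a x = (\<Sum>i\<le>degree a. coeff a i * x ^ i)" by (rule poly_altdef)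
  also have "\<dots> = (\<Sum>i<n. coeff a i * x ^ i)"
    by (rule sum.mono_neutral_left) (use d in \<open>auto simp: coeff_eq_0\<close>)
  finally show ?thesis .
qed

lemma coeff_tau: "coeff (tau n e v (a::'a::field poly)) j = (\<Sum>i<n. if nat ((v * int i) mod int n) = j then coeff a i ^ e else 0)"
  unfolding tau_def by (simp add: coeff_sum coeff_monom)

lemma coeff_tau_1: "coeff (tau n e 1 a) j = (if j < n then coeff (a::'a::field poly) j ^ e else 0)"
proof -
  have "coeff (tau n e 1 a) j = (\<Sum>i<n. if i = j then coeff a i ^ e else 0)"
  proof (unfold coeff_tau, intro sum.cong refl)
    fix i assume "i \<in> {..<n}"
    then have "nat ((1 * int i) mod int n) = i"
      by (metis lessThan_iff mod_less mult_1 nat_int of_nat_mod)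
    then show "(if nat ((1 * int i) mod int n) = j then coeff a i ^ e else 0) = (if i = j then coeff a i ^ e else 0)"
      by simp
  qed
  also have "\<dots> = (if j < n then coeff a j ^ e else 0)" by (simp add: sum.delta)
  finally show ?thesis .
qed

lemma finite_degree_less: "finite {a :: 'a::{zero,finite} poly. degree a < n}"
proof -
  have "{a :: 'a poly. degree a < n} \<subseteq> Poly ` {xs. set xs \<subseteq> UNIV \<and> length xs = n}"
  proof
    fix a :: "'a poly" assume "a \<in> {a. degree a < n}"
    then have d: "degree a < n" by simp
    have "a = Poly (map (coeff a) [0..<n])"
      by (rule poly_eqI) (use d in \<open>auto simp: nth_default_def coeff_eq_0\<close>)
    moreover have "map (coeff a) [0..<n] \<in> {xs. set xs \<subseteq> UNIV \<and> length xs = n}" by simp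
    ultimately show "a \<in> Poly ` {xs. set xs \<subseteq> UNIV \<and> length xs = n}" by (rule image_eqI)
  qed
  moreover have "finite (Poly ` {xs. set xs \<subseteq> (UNIV :: 'a set) \<and> length xs = n})"
    by (rule finite_imageI[OF finite_lists_length_eq]) simp
  ultimately show ?thesis by (rule finite_subset)
qed

lemma rmul_comm: "rmul n a b = rmul n b (a::'a::field poly)" unfolding rmul_def by (simp add: mult.commute)
lemma rmul_assoc: "rmul n (rmul n a b) c = rmul n a (rmul n (b::'a::field poly) c)"
  unfolding rmul_def by (simp add: mod_mult_left_eq mod_mult_right_eq mult.assoc)
lemma rmul_add: "rmul n a (b + c) = rmul n a b + rmul n a (c::'a::field poly)"
  unfolding rmul_def by (simp add: distrib_left poly_mod_add_left)
lemma rmul_add_left: "rmul n (b + c) a = rmul n b a + rmul n (c::'a::field poly) a"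
  using rmul_add rmul_comm by metis
lemma rmul_diff: "rmul n a (b - c) = rmul n a b - rmul n a (c::'a::field poly)"
  unfolding rmul_def by (simp add: right_diff_distrib poly_mod_diff_left)
lemma rmul_minus: "rmul n a (- b) = - rmul n a (b::'a::field poly)"
  unfolding rmul_def by simp
lemma rmul_minus_left: "rmul n (- b) a = - rmul n (b::'a::field poly) a"
  unfolding rmul_def by simp
lemma rmul_0: "rmul n a 0 = (0::'a::field poly)" unfolding rmul_def by simp
lemma rmul_0_left: "rmul n 0 a = (0::'a::field poly)" unfolding rmul_def by simp
lemma rmul_1:
  assumes "degree a < n" shows "rmul n a 1 = (a::'a::field poly)"
proof -
  have "degree (xn1 n :: 'a poly) = n" using assms by (intro degree_xn1) simp
  then show ?thesis unfolding rmul_def using assms by (simp add: mod_poly_less)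
qed
lemma rmul_sum: "rmul n a (sum f A) = (\<Sum>i\<in>A. rmul n a (f i :: 'a::field poly))"
  by (induction A rule: infinite_finite_induct) (auto simp: rmul_add rmul_0)
lemma rmul_smult: "rmul n a (smult c b) = smult c (rmul n a (b::'a::field poly))"
  unfolding rmul_def by (simp add: mod_smult_left)
lemma rmul_smult_left: "rmul n (smult c b) a = smult c (rmul n (b::'a::field poly) a)"
  unfolding rmul_def by (simp add: mod_smult_left)

locale cyclic_setup =
  fixes \<eta> :: "'a::{field,finite}" and k q n t :: nat
  assumes q_eq: "q = CHAR('a) ^ k" and n_pos: "0 < n" and coprime_n_q: "coprime n q"
    and t_pos: "0 < t" and primitive_eta: "primitive_root n \<eta>"
begin

section \<open>Frobenius powers in the ambient field\<close>

lemma prime_CHAR: "prime CHAR('a)"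
  by (rule prime_CHAR_semidom[OF finite_imp_CHAR_pos]) simp

lemma ex_q_power_cong_1: "\<exists>T\<ge>1. [q ^ T = 1] (mod n)"
proof -
  let ?f = "\<lambda>j. q ^ j mod n"
  have "?f ` {..n} \<subseteq> {..<n}" using n_pos by auto
  then have "card (?f ` {..n}) \<le> n" using card_mono[of "{..<n}"] by fastforce
  then have "\<not> inj_on ?f {..n}" using card_image by fastforce
  then obtain a b where "a < b" "?f a = ?f b" unfolding inj_on_def by (metis linorder_neq_iff)
  then have "[q ^ a * q ^ (b - a) = q ^ a * 1] (mod n)" by (simp add: cong_def flip: power_add)
  moreover have "coprime (q ^ a) n" using coprime_n_q by (simp add: coprime_commute)
  ultimately have "[q ^ (b - a) = 1] (mod n)" using cong_mult_lcancel_nat by blast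
  then show ?thesis using \<open>a < b\<close> by (intro exI[of _ "b - a"]) auto
qed

lemma q_power_eq_CHAR_power: "q ^ w = CHAR('a) ^ (k * w)"
  using q_eq by (simp add: power_mult)

lemma qpow_add: "(x + y :: 'a) ^ (q ^ w) = x ^ (q ^ w) + y ^ (q ^ w)"
  by (rule freshmans_dream') (use prime_CHAR q_power_eq_CHAR_power in auto)

lemma qpow_sum: "(sum f A :: 'a) ^ (q ^ w) = (\<Sum>i\<in>A. f i ^ (q ^ w))"
  by (rule freshmans_dream_sum') (use prime_CHAR q_power_eq_CHAR_power in auto)

lemma q_pos: "q > 0" using q_eq prime_CHAR prime_gt_0_nat by simp

lemma qpow_uminus: "(- x :: 'a) ^ (q ^ w) = - (x ^ (q ^ w))"
proof -
  have "0 = (x + - x) ^ (q ^ w)" using q_pos by simp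
  also have "\<dots> = x ^ (q ^ w) + (- x) ^ (q ^ w)" by (rule qpow_add)
  finally show ?thesis by (simp add: eq_neg_iff_add_eq_0 add.commute)
qed

lemma qpow_diff: "(x - y :: 'a) ^ (q ^ w) = x ^ (q ^ w) - y ^ (q ^ w)"
  using qpow_add[of x "- y" w] qpow_uminus[of y w] by simp

lemma power_q_power_iterate: "(x::'a) ^ (q ^ a) = x \<Longrightarrow> x ^ (q ^ (a * j)) = x"
proof (induction j)
  case 0 then show ?case by simp
next
  case (Suc j)
  have "x ^ (q ^ (a * Suc j)) = (x ^ (q ^ (a * j))) ^ (q ^ a)"
    by (simp add: power_mult[symmetric] power_add[symmetric] mult.commute)
  then show ?case using Suc by simp
qed

lemma subF_mono: "x \<in> subF (q ^ a) \<Longrightarrow> a dvd b \<Longrightarrow> (x::'a) \<in> subF (q ^ b)"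
  using power_q_power_iterate[of x a] unfolding subF_def by (auto elim!: dvdE)

lemma subF_q: "x \<in> subF q \<Longrightarrow> (x::'a) \<in> subF (q ^ b)"
  using subF_mono[of x 1 b] by simp

lemma subF_add: "x \<in> subF (q^w) \<Longrightarrow> y \<in> subF (q^w) \<Longrightarrow> (x + y::'a) \<in> subF (q^w)"
  unfolding subF_def using qpow_add by simp
lemma subF_diff: "x \<in> subF (q^w) \<Longrightarrow> y \<in> subF (q^w) \<Longrightarrow> (x - y::'a) \<in> subF (q^w)"
  unfolding subF_def using qpow_diff by simp
lemma subF_uminus: "x \<in> subF (q^w) \<Longrightarrow> (- x::'a) \<in> subF (q^w)"
  unfolding subF_def using qpow_uminus by simp
lemma subF_mult: "x \<in> subF m \<Longrightarrow> y \<in> subF m \<Longrightarrow> (x * y::'a) \<in> subF m"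
  unfolding subF_def by (simp add: power_mult_distrib)
lemma subF_0: "(0::'a) \<in> subF (q^w)"
  unfolding subF_def using q_pos by simp
lemma subF_1: "(1::'a) \<in> subF m"
  unfolding subF_def by simp
lemma subF_sum: "(\<And>i. i \<in> A \<Longrightarrow> f i \<in> subF (q^w)) \<Longrightarrow> (sum f A::'a) \<in> subF (q^w)"
  by (induction A rule: infinite_finite_induct) (auto intro: subF_add subF_0)
lemma subF_power: "x \<in> subF (q^w) \<Longrightarrow> (x::'a) ^ e \<in> subF (q^w)"
proof -
  assume "x \<in> subF (q^w)"
  then have "x ^ (q^w) = x" unfolding subF_def by simp
  then have "(x ^ e) ^ (q^w) = x ^ e" by (metis power_mult mult.commute)
  then show ?thesis unfolding subF_def by simp
qed

lemma eta_power_n: "\<eta> ^ n = 1" using primitive_eta unfolding primitive_root_def by simp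
lemma eta_neq_0: "\<eta> \<noteq> 0" using eta_power_n n_pos by (metis one_neq_zero power_0_left not_gr0)

lemma eta_powi_n: "\<eta> powi (int n) = 1" using eta_power_n by simp

lemma eta_powi_cong: "[a = b] (mod int n) \<Longrightarrow> \<eta> powi a = \<eta> powi b"
proof -
  assume "[a = b] (mod int n)"
  then obtain j where j: "a = b + int n * j"
    by (metis cong_iff_lin cong_sym)
  have "\<eta> powi a = \<eta> powi b * (\<eta> powi (int n)) powi j"
    using eta_neq_0 by (simp add: j power_int_add power_int_mult)
  then show ?thesis using eta_powi_n by simp
qed

lemma eta_powi_mod: "\<eta> powi (a mod int n) = \<eta> powi a"
  by (rule eta_powi_cong) (simp add: cong_def)

lemma eta_power_inj:
  assumes "i < n" and "j < n" and "\<eta> ^ i = \<eta> ^ j"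
  shows "i = j"
proof -
  have "\<eta> ^ i \<noteq> \<eta> ^ j" if "i < j" "j < n" for i j
  proof
    assume "\<eta> ^ i = \<eta> ^ j"
    moreover have "\<eta> ^ i * \<eta> ^ (j - i) = \<eta> ^ j" using that(1) by (simp flip: power_add)
    ultimately have "\<eta> ^ (j - i) = 1" using eta_neq_0 by simp
    moreover have "0 < j - i" "j - i < n" using that by auto
    ultimately show False using primitive_eta unfolding primitive_root_def by blast
  qed
  then show ?thesis using assms by (metis linorder_neq_iff)
qed

section \<open>The discrete Fourier transform\<close>

definition dft :: "'a poly \<Rightarrow> int \<Rightarrow> 'a" where "dft a z = poly a (\<eta> powi z)"

lemma eta_powi_pow: "(\<eta> powi a) ^ m = \<eta> powi (a * int m)"
  by (simp add: power_int_mult)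

lemma degree_xn1_n: "degree (xn1 n :: 'a poly) = n"
  by (rule degree_xn1) (use n_pos in simp)

lemma xn1_neq_0: "(xn1 n :: 'a poly) \<noteq> 0" using degree_xn1_n n_pos by auto

lemma poly_xn1_eta_powi: "poly (xn1 n) (\<eta> powi z) = 0"
proof -
  have "(\<eta> powi z) ^ n = \<eta> powi (z * int n)" by (rule eta_powi_pow)
  also have "\<dots> = (\<eta> powi (int n)) powi z" by (metis mult.commute power_int_mult)
  also have "\<dots> = 1" using eta_powi_n by simp
  finally show ?thesis by (simp add: poly_xn1)
qed

lemma dft_mod: "dft (a mod xn1 n) z = dft a z"
proof -
  have "a = (a div xn1 n) * xn1 n + a mod xn1 n" by simp
  then have "poly a (\<eta> powi z) = poly (a div xn1 n) (\<eta> powi z) * 0 + poly (a mod xn1 n) (\<eta> powi z)"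
    by (metis poly_add poly_mult poly_xn1_eta_powi)
  then show ?thesis unfolding dft_def by simp
qed

lemma dft_rmul: "dft (rmul n a b) z = dft a z * dft b z"
  unfolding rmul_def by (simp add: dft_mod) (simp add: dft_def)

lemma dft_diff: "dft (a - b) z = dft a z - dft b z" by (simp add: dft_def)
lemma dft_zero: "dft 0 z = 0" by (simp add: dft_def)
lemma dft_sum: "dft (sum f A) z = (\<Sum>i\<in>A. dft (f i) z)" by (simp add: dft_def poly_sum)
lemma dft_smult: "dft (smult c a) z = c * dft a z" by (simp add: dft_def)

lemma dft_cong: "[z = z'] (mod int n) \<Longrightarrow> dft a z = dft a z'"
  unfolding dft_def using eta_powi_cong by metis

lemma degree_rmul: "degree (rmul n a (b::'a poly)) < n"
proof -
  have "rmul n a b = 0 \<or> degree (rmul n a b) < degree (xn1 n :: 'a poly)"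
    unfolding rmul_def using degree_mod_less[OF xn1_neq_0] by blast
  then show ?thesis using degree_xn1_n n_pos by auto
qed

lemma dft_eqI:
  assumes "degree a < n" "degree b < n" "\<And>z. dft a z = dft b z"
  shows "a = b"
proof (rule ccontr)
  assume ne: "a \<noteq> b"
  let ?d = "a - b"
  have dnz: "?d \<noteq> 0" using ne by simp
  have dd: "degree ?d < n" using assms(1,2) degree_diff_le_max[of a b] by linarith
  have sub: "(\<lambda>i. \<eta> ^ i) ` {..<n} \<subseteq> {x. poly ?d x = 0}"
  proof
    fix x assume "x \<in> (\<lambda>i. \<eta> ^ i) ` {..<n}"
    then obtain i where x: "x = \<eta> ^ i" by auto
    have "dft a (int i) = dft b (int i)" by (rule assms(3))
    then show "x \<in> {x. poly ?d x = 0}" unfolding dft_def x by simp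
  qed
  have "inj_on (\<lambda>i. \<eta> ^ i) {..<n}" using eta_power_inj by (auto simp: inj_on_def)
  then have "card ((\<lambda>i. \<eta> ^ i) ` {..<n}) = n" by (simp add: card_image)
  moreover have "card ((\<lambda>i. \<eta> ^ i) ` {..<n}) \<le> card {x. poly ?d x = 0}"
    by (rule card_mono[OF poly_roots_finite[OF dnz] sub])
  moreover have "card {x. poly ?d x = 0} \<le> degree ?d" by (rule card_poly_roots_bound[OF dnz])
  ultimately show False using dd by linarith
qed

lemma degree_tau: "degree (tau n e v (a::'a poly)) < n"
proof (rule degree_lessI[OF disjI2[OF n_pos]], intro allI impI)
  fix j assume j: "j \<ge> n"
  have "nat ((v * int i) mod int n) \<noteq> j" for i
  proof -
    have "(v * int i) mod int n < int n" "0 \<le> (v * int i) mod int n" using n_pos by simp_all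
    then have "nat ((v * int i) mod int n) < n" by linarith
    then show ?thesis using j by linarith
  qed
  then show "coeff (tau n e v a) j = 0" unfolding coeff_tau
    by (intro sum.neutral) auto
qed

lemma tau_add: "tau n (q ^ w) v ((a::'a poly) + b) = tau n (q ^ w) v a + tau n (q ^ w) v b"
  unfolding tau_def by (simp only: coeff_add qpow_add add_monom[symmetric] sum.distrib)

lemma tau_0: "tau n (q ^ w) v 0 = (0::'a poly)" using q_pos
  unfolding tau_def by (simp add: zero_power)

lemma dft_tau:
  assumes "degree a < n"
  shows "dft (tau n (q ^ w) v a) (z * int (q ^ w)) = (dft a (v * z)) ^ (q ^ w)"
proof -
  let ?e = "q ^ w"
  have "dft (tau n ?e v a) (z * int ?e) = (\<Sum>i<n. coeff a i ^ ?e * (\<eta> powi (z * int ?e)) ^ nat ((v * int i) mod int n))"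
    unfolding dft_def tau_def by (simp add: poly_sum poly_monom)
  also have "\<dots> = (\<Sum>i<n. coeff a i ^ ?e * \<eta> powi (v * z * int i * int ?e))"
  proof (rule sum.cong[OF refl])
    fix i
    have "(\<eta> powi (z * int ?e)) ^ nat ((v * int i) mod int n) = \<eta> powi (z * int ?e * ((v * int i) mod int n))"
      using n_pos by (simp add: eta_powi_pow)
    also have "\<dots> = \<eta> powi (z * int ?e * (v * int i))"
    proof (rule eta_powi_cong)
      have "[(v * int i) mod int n = v * int i] (mod int n)" by (simp add: cong_def)
      then show "[z * int ?e * ((v * int i) mod int n) = z * int ?e * (v * int i)] (mod int n)"
        by (rule cong_mult[OF cong_refl])
    qed
    also have "z * int ?e * (v * int i) = v * z * int i * int ?e" by (simp only: mult_ac)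
    finally show "coeff a i ^ ?e * (\<eta> powi (z * int ?e)) ^ nat ((v * int i) mod int n) = coeff a i ^ ?e * \<eta> powi (v * z * int i * int ?e)" by simp
  qed
  also have "\<dots> = (\<Sum>i<n. (coeff a i * (\<eta> powi (v * z)) ^ i) ^ ?e)"
  proof (rule sum.cong[OF refl])
    fix i
    have "((\<eta> powi (v * z)) ^ i) ^ ?e = \<eta> powi (v * z * int i * int ?e)"
      by (simp only: eta_powi_pow)
    then show "coeff a i ^ ?e * \<eta> powi (v * z * int i * int ?e) = (coeff a i * (\<eta> powi (v * z)) ^ i) ^ ?e"
      by (simp only: power_mult_distrib)
  qed
  also have "\<dots> = (\<Sum>i<n. coeff a i * (\<eta> powi (v * z)) ^ i) ^ ?e" by (simp add: qpow_sum)
  also have "\<dots> = (dft a (v * z)) ^ ?e" unfolding dft_def using poly_as_sum_lessThan[OF assms] by simp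
  finally show ?thesis .
qed

definition q_period :: nat where "q_period = (SOME T. T \<ge> 1 \<and> [q ^ T = 1] (mod n))"
lemma q_period: "q_period \<ge> 1" "[q ^ q_period = 1] (mod n)"
  using someI_ex[OF ex_q_power_cong_1] unfolding q_period_def by auto

lemma q_period_power_cong_int: "[int q ^ (q_period * j) = 1] (mod int n)"
proof -
  have "[q ^ (q_period * j) = 1 ^ j] (mod n)" unfolding power_mult by (rule cong_pow[OF q_period(2)])
  then have "[int (q ^ (q_period * j)) = int 1] (mod int n)" using cong_int_iff[of "q^(q_period*j)" 1 n] by simp
  then show ?thesis by (simp only: of_nat_power of_nat_1)
qed

lemma mult_q_power_inverse_cong: "[z * int (q ^ (w * (q_period - 1))) * int (q ^ w) = z] (mod int n)"
proof -
  have "z * int (q ^ (w * (q_period - 1))) * int (q ^ w) = z * int q ^ (q_period * w)"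
    using q_period(1) by (simp add: power_add[symmetric] algebra_simps)
  also have "[\<dots> = z * 1] (mod int n)" by (rule cong_mult[OF cong_refl q_period_power_cong_int])
  finally show ?thesis by simp
qed

lemma dft_eqI_frob:
  assumes "degree a < n" "degree b < n" "\<And>z. dft a (z * int (q ^ w)) = dft b (z * int (q ^ w))"
  shows "a = b"
proof (rule dft_eqI[OF assms(1,2)])
  fix z
  let ?z' = "z * int (q ^ (w * (q_period - 1)))"
  have "dft a z = dft a (?z' * int (q ^ w))" by (rule dft_cong[OF cong_sym[OF mult_q_power_inverse_cong]])
  also have "\<dots> = dft b (?z' * int (q ^ w))" by (rule assms(3))
  also have "\<dots> = dft b z" by (rule dft_cong[OF mult_q_power_inverse_cong])
  finally show "dft a z = dft b z" .
qed

abbreviation inRn :: "nat \<Rightarrow> 'a poly \<Rightarrow> bool" where "inRn w a \<equiv> a \<in> Rn (subF (q ^ w)) n"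

lemma inRn_deg: "inRn w a \<Longrightarrow> degree a < n" unfolding Rn_def by simp
lemma inRn_coeff: "inRn w a \<Longrightarrow> coeff a i ^ (q ^ w) = coeff a i" unfolding Rn_def subF_def by simp

lemma tau_frob_id: "inRn w a \<Longrightarrow> tau n (q ^ w) 1 a = a"
proof (rule poly_eqI)
  fix i assume a: "inRn w a"
  show "coeff (tau n (q ^ w) 1 a) i = coeff a i"
  proof (cases "i < n")
    case True then show ?thesis by (simp add: coeff_tau_1 inRn_coeff[OF a])
  next
    case False then have "coeff a i = 0" using inRn_deg[OF a] by (intro coeff_eq_0) simp
    then show ?thesis using False by (simp add: coeff_tau_1)
  qed
qed

lemma dft_frob_power: "inRn w a \<Longrightarrow> dft a (z * int (q ^ w)) = (dft a z) ^ (q ^ w)"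
  using dft_tau[where a=a and w=w and v=1 and z=z] tau_frob_id[where w=w and a=a] inRn_deg[where w=w and a=a] by simp

lemma inRn_if_dft_frob_power:
  assumes "degree a < n" "\<And>z. dft a (z * int (q ^ w)) = (dft a z) ^ (q ^ w)"
  shows "inRn w a"
proof -
  have "tau n (q ^ w) 1 a = a"
    by (rule dft_eqI_frob[of _ _ w]) (use assms dft_tau[OF assms(1), where w=w and v=1] degree_tau in auto)
  then have "coeff a i ^ (q ^ w) = coeff a i" for i
    using coeff_tau_1[of n "q^w" a i] assms(1) coeff_eq_0[of a i] q_pos
    by (metis (no_types, lifting) leI le_less_trans zero_power less_numeral_extra(3) not_gr_zero power_eq_0_iff)
  then show ?thesis using assms(1) unfolding Rn_def subF_def by auto
qed

lemma inRn_diff: "inRn w a \<Longrightarrow> inRn w b \<Longrightarrow> inRn w (a - b)"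
  unfolding Rn_def using degree_diff_le_max[of a b] by (auto intro: subF_diff)
lemma inRn_uminus: "inRn w a \<Longrightarrow> inRn w (- a)"
  unfolding Rn_def by (auto intro: subF_uminus)
lemma inRn_0: "inRn w 0" unfolding Rn_def using n_pos subF_0 by auto
lemma inRn_1: "inRn w 1" unfolding Rn_def using n_pos subF_0 subF_1 by (auto simp: coeff_1)
lemma inRn_smult: "c \<in> subF (q ^ w) \<Longrightarrow> inRn w a \<Longrightarrow> inRn w (smult c a)"
  unfolding Rn_def by (auto intro: subF_mult)
lemma inRn_rmul: "inRn w a \<Longrightarrow> inRn w b \<Longrightarrow> inRn w (rmul n a b)"
proof -
  assume a: "inRn w a" and b: "inRn w b"
  show ?thesis
    by (rule inRn_if_dft_frob_power[OF degree_rmul]) (simp only: dft_rmul dft_frob_power[OF a] dft_frob_power[OF b] power_mult_distrib)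
qed
lemma inRn_tau: "inRn w a \<Longrightarrow> inRn w (tau n e v a)"
proof -
  assume a: "inRn w a"
  have "coeff (tau n e v a) j \<in> subF (q ^ w)" for j
    unfolding coeff_tau using a unfolding Rn_def
    by (intro subF_sum) (auto intro: subF_power subF_0)
  then show ?thesis using degree_tau unfolding Rn_def by auto
qed
lemma inRn_mono: "inRn 1 a \<Longrightarrow> inRn w a"
  unfolding Rn_def using subF_q by auto

section \<open>Cyclotomic cosets\<close>

definition in_coset :: "nat \<Rightarrow> int \<Rightarrow> bool" where
  "in_coset l z \<longleftrightarrow> (\<exists>j. [z = int l * int q ^ j] (mod int n))"

lemma in_coset_cong: "[z = z'] (mod int n) \<Longrightarrow> in_coset l z = in_coset l z'"
  unfolding in_coset_def by (meson cong_sym cong_trans)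

lemma in_coset_mult: "in_coset l z \<Longrightarrow> in_coset l (z * int q ^ w)"
proof -
  assume "in_coset l z"
  then obtain j where "[z = int l * int q ^ j] (mod int n)" unfolding in_coset_def by auto
  then have "[z * int q ^ w = int l * int q ^ j * int q ^ w] (mod int n)" by (rule cong_mult[OF _ cong_refl])
  then show ?thesis unfolding in_coset_def by (intro exI[of _ "j + w"]) (simp add: power_add mult.assoc)
qed

lemma in_coset_cancel: "in_coset l (z * int q ^ w) \<Longrightarrow> in_coset l z"
proof -
  assume "in_coset l (z * int q ^ w)"
  then have "in_coset l (z * int q ^ w * int q ^ (w * (q_period - 1)))" by (rule in_coset_mult)
  moreover have "[z * int q ^ w * int q ^ (w * (q_period - 1)) = z] (mod int n)"
    using mult_q_power_inverse_cong[of z w] by (simp add: mult_ac)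
  ultimately show ?thesis using in_coset_cong by metis
qed

lemma in_coset_orbit: "in_coset l z \<Longrightarrow> in_coset l z0 \<Longrightarrow> \<exists>w. [z = z0 * int q ^ w] (mod int n)"
proof -
  assume "in_coset l z" "in_coset l z0"
  then obtain m i where m: "[z = int l * int q ^ m] (mod int n)" and i: "[z0 = int l * int q ^ i] (mod int n)"
    unfolding in_coset_def by auto
  have "[z0 * int q ^ (m + (q_period - 1) * i) = int l * int q ^ i * int q ^ (m + (q_period - 1) * i)] (mod int n)"
    by (rule cong_mult[OF i cong_refl])
  also have "int l * int q ^ i * int q ^ (m + (q_period - 1) * i) = int l * int q ^ m * int q ^ (q_period * i)"
  proof -
    obtain T' where T': "q_period = Suc T'" using q_period(1) by (cases q_period) auto
    have e: "i + (m + (q_period - 1) * i) = m + q_period * i" unfolding T' by simp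
    have "int l * int q ^ i * int q ^ (m + (q_period - 1) * i) = int l * int q ^ (i + (m + (q_period - 1) * i))"
      by (simp add: power_add mult.assoc)
    also have "\<dots> = int l * int q ^ m * int q ^ (q_period * i)" by (simp only: e power_add mult.assoc)
    finally show ?thesis .
  qed
  also have "[\<dots> = int l * int q ^ m * 1] (mod int n)" by (rule cong_mult[OF cong_refl q_period_power_cong_int])
  finally have "[z0 * int q ^ (m + (q_period - 1) * i) = int l * int q ^ m] (mod int n)" by simp
  then have "[z = z0 * int q ^ (m + (q_period - 1) * i)] (mod int n)" using m cong_sym cong_trans by metis
  then show ?thesis by blast
qed

lemma mem_cyc_coset_iff: "x \<in> cyc_coset n q l \<longleftrightarrow> x < n \<and> in_coset l (int x)"
proof
  assume "x \<in> cyc_coset n q l"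
  then obtain j where j: "x = (l * q ^ j) mod n" unfolding cyc_coset_def by auto
  then have "x < n" using n_pos by simp
  moreover have "[int x = int l * int q ^ j] (mod int n)"
    using j by (simp add: cong_def of_nat_mod[symmetric] zmod_int)
  ultimately show "x < n \<and> in_coset l (int x)" unfolding in_coset_def by auto
next
  assume "x < n \<and> in_coset l (int x)"
  then obtain j where x: "x < n" and j: "[int x = int l * int q ^ j] (mod int n)" unfolding in_coset_def by auto
  then have "[x = l * q ^ j] (mod n)" by (metis cong_int_iff of_nat_mult of_nat_power)
  then have "x = (l * q ^ j) mod n" using x by (simp add: cong_def)
  then show "x \<in> cyc_coset n q l" unfolding cyc_coset_def by auto
qed

lemma nat_mod_mem_cyc_coset_iff: "nat (z mod int n) \<in> cyc_coset n q l \<longleftrightarrow> in_coset l z"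
proof -
  have a: "nat (z mod int n) < n" using n_pos by (simp add: nat_less_iff)
  have b: "[int (nat (z mod int n)) = z] (mod int n)" using n_pos by (simp add: cong_def)
  show ?thesis using mem_cyc_coset_iff[of "nat (z mod int n)" l] in_coset_cong[OF b, of l] a by simp
qed

lemma in_coset_negmod: "in_coset (negmod n l) z \<longleftrightarrow> in_coset l (- z)"
proof -
  have nm: "[int (negmod n l) = - int l] (mod int n)"
  proof -
    have "int (negmod n l) = (int n - int (l mod n)) mod int n"
      unfolding negmod_def using n_pos by (simp add: of_nat_diff zmod_int)
    also have "[\<dots> = int n - int (l mod n)] (mod int n)" by (simp add: cong_def)
    also have "[int n - int (l mod n) = 0 - int l] (mod int n)"
      by (rule cong_diff) (simp_all add: cong_def zmod_int[symmetric])
    finally show ?thesis by simp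
  qed
  have "[z = int (negmod n l) * int q ^ j] (mod int n) \<longleftrightarrow> [- z = int l * int q ^ j] (mod int n)" for j
  proof -
    have "[int (negmod n l) * int q ^ j = - int l * int q ^ j] (mod int n)" by (rule cong_mult[OF nm cong_refl])
    then have "[z = int (negmod n l) * int q ^ j] (mod int n) \<longleftrightarrow> [z = - (int l * int q ^ j)] (mod int n)"
      by (auto intro: cong_trans cong_sym)
    also have "\<dots> \<longleftrightarrow> [- z = int l * int q ^ j] (mod int n)"
      by (metis cong_minus_minus_iff minus_minus)
    finally show ?thesis .
  qed
  then show ?thesis unfolding in_coset_def by simp
qed

lemma cyc_coset_subset: "in_coset l z \<Longrightarrow> in_coset l' z \<Longrightarrow> cyc_coset n q l \<subseteq> cyc_coset n q l'"
proof
  fix x assume a: "in_coset l z" "in_coset l' z" and x: "x \<in> cyc_coset n q l"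
  then have kn: "x < n" and kC: "in_coset l (int x)" using mem_cyc_coset_iff by auto
  obtain w where w: "[int x = z * int q ^ w] (mod int n)" using in_coset_orbit[OF kC a(1)] by auto
  have "in_coset l' (z * int q ^ w)" by (rule in_coset_mult[OF a(2)])
  then have "in_coset l' (int x)" using in_coset_cong[OF w, of l'] by simp
  then show "x \<in> cyc_coset n q l'" using kn mem_cyc_coset_iff by auto
qed

lemma in_coset_disjoint: "cyc_coset n q l \<noteq> cyc_coset n q l' \<Longrightarrow> \<not> (in_coset l z \<and> in_coset l' z)"
  using cyc_coset_subset by blast

lemma mod_mem_cyc_coset: "l mod n \<in> cyc_coset n q l" unfolding cyc_coset_def by (intro CollectI exI[of _ 0]) simp

section \<open>The minimal ideals \<open>K_l\<close> and \<open>J_l\<close>\<close>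

abbreviation root_factor :: "nat \<Rightarrow> 'a poly" where "root_factor i \<equiv> [:- (\<eta> ^ i), 1:]"

lemma eta_pow_mod: "\<eta> ^ a = \<eta> ^ (a mod n)"
proof -
  have "\<eta> ^ a = \<eta> ^ (n * (a div n) + a mod n)" by simp
  also have "\<dots> = (\<eta> ^ n) ^ (a div n) * \<eta> ^ (a mod n)" by (simp only: power_add power_mult)
  finally have "\<eta> ^ a = (\<eta> ^ n) ^ (a div n) * \<eta> ^ (a mod n)" .
  then show ?thesis using eta_power_n by simp
qed

lemma eta_powi_nat: "\<eta> powi z = \<eta> ^ nat (z mod int n)"
proof -
  have "\<eta> powi z = \<eta> powi (z mod int n)" by (rule eta_powi_mod[symmetric])
  also have "\<dots> = \<eta> powi int (nat (z mod int n))"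
  proof -
    have e: "int (nat (z mod int n)) = z mod int n" using n_pos by simp
    show ?thesis by (simp only: e)
  qed
  also have "\<dots> = \<eta> ^ nat (z mod int n)" by (rule power_int_of_nat)
  finally show ?thesis .
qed

lemma degree_prod_root_factor: "degree (\<Prod>i\<in>A. root_factor i) = card A"
proof (cases "finite A")
  case True
  have "degree (\<Prod>i\<in>A. root_factor i) = (\<Sum>i\<in>A. degree (root_factor i))" by (rule degree_prod_sum_eq) simp
  then show ?thesis by simp
next
  case False then show ?thesis by simp
qed

lemma lead_coeff_prod_root_factor: "lead_coeff (\<Prod>i\<in>A. root_factor i) = 1"
  by (simp add: lead_coeff_prod)

lemma prod_root_factor_neq_0: "(\<Prod>i\<in>A. root_factor i) \<noteq> 0"
  using lead_coeff_prod_root_factor[of A] by auto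

lemma dft_prod_root_factor: "dft (\<Prod>i\<in>A. root_factor i) z = (\<Prod>i\<in>A. \<eta> powi z - \<eta> ^ i)"
  unfolding dft_def by (simp add: poly_prod)

lemma dft_prod_root_factor_eq_0: "A \<subseteq> {..<n} \<Longrightarrow> dft (\<Prod>i\<in>A. root_factor i) z = 0 \<longleftrightarrow> nat (z mod int n) \<in> A"
proof -
  assume A: "A \<subseteq> {..<n}"
  have fin: "finite A" using A finite_subset by blast
  have zn: "nat (z mod int n) < n" using n_pos by (simp add: nat_less_iff)
  have "dft (\<Prod>i\<in>A. root_factor i) z = 0 \<longleftrightarrow> (\<exists>i\<in>A. \<eta> ^ nat (z mod int n) = \<eta> ^ i)"
    unfolding dft_prod_root_factor eta_powi_nat using fin by (simp add: prod_zero_iff)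
  also have "\<dots> \<longleftrightarrow> nat (z mod int n) \<in> A"
    using eta_power_inj zn A by blast
  finally show ?thesis .
qed

lemma xn1_eq_prod_root_factor: "xn1 n = (\<Prod>i<n. root_factor i)"
proof -
  let ?P = "\<Prod>i<n. root_factor i"
  have "coeff (xn1 n - ?P) j = 0" if "n \<le> j" for j
  proof (cases "j = n")
    case True
    have "coeff ?P n = 1"
      using lead_coeff_prod_root_factor[of "{..<n}"] degree_prod_root_factor[of "{..<n}"] by simp
    then show ?thesis using True n_pos by (simp add: xn1_def coeff_monom)
  next
    case False
    then have "coeff (xn1 n :: 'a poly) j = 0" "coeff ?P j = 0"
      using that degree_xn1_n degree_prod_root_factor[of "{..<n}"] by (auto intro!: coeff_eq_0)
    then show ?thesis by simp
  qed
  then have "degree (xn1 n - ?P) < n" using n_pos by (intro degree_lessI) auto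
  moreover have "dft (xn1 n - ?P) z = dft 0 z" for z
  proof -
    have "dft (xn1 n) z = 0" unfolding dft_def by (rule poly_xn1_eta_powi)
    moreover have "dft ?P z = 0" using dft_prod_root_factor_eq_0[of "{..<n}" z] n_pos by (simp add: nat_less_iff)
    ultimately show ?thesis by (simp add: dft_diff dft_zero)
  qed
  ultimately have "xn1 n - ?P = 0" using n_pos by (intro dft_eqI) auto
  then show ?thesis by simp
qed

definition coset_compl :: "nat \<Rightarrow> nat set" where "coset_compl l = {..<n} - cyc_coset n q l"
definition gen :: "nat \<Rightarrow> 'a poly" where "gen l = xn1 n div fpoly \<eta> (cyc_coset n q l)"

lemma cyc_coset_subset_lessThan: "cyc_coset n q l \<subseteq> {..<n}" unfolding cyc_coset_def using n_pos by auto

lemma gen_eq_prod: "gen l = (\<Prod>i\<in>coset_compl l. root_factor i)"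
proof -
  have "xn1 n = (\<Prod>i\<in>coset_compl l. root_factor i) * fpoly \<eta> (cyc_coset n q l)"
    unfolding xn1_eq_prod_root_factor fpoly_def coset_compl_def by (rule prod.subset_diff[OF cyc_coset_subset_lessThan]) simp
  moreover have "fpoly \<eta> (cyc_coset n q l) \<noteq> 0" unfolding fpoly_def by (rule prod_root_factor_neq_0)
  ultimately show ?thesis unfolding gen_def by simp
qed

lemma degree_gen: "degree (gen l) < n"
proof -
  have "card (coset_compl l) < card {..<n}" unfolding coset_compl_def
    using mod_mem_cyc_coset[of l] cyc_coset_subset_lessThan[of l] by (intro psubset_card_mono) auto
  then show ?thesis unfolding gen_eq_prod degree_prod_root_factor by simp
qed

lemma dft_gen_eq_0: "dft (gen l) z = 0 \<longleftrightarrow> \<not> in_coset l z"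
proof -
  have "dft (gen l) z = 0 \<longleftrightarrow> nat (z mod int n) \<in> coset_compl l"
    unfolding gen_eq_prod by (rule dft_prod_root_factor_eq_0) (auto simp: coset_compl_def)
  also have "\<dots> \<longleftrightarrow> \<not> in_coset l z" unfolding coset_compl_def using n_pos nat_mod_mem_cyc_coset_iff[of z l]
    by (simp add: nat_less_iff)
  finally show ?thesis .
qed

lemma bij_mult_q_coset_compl: "bij_betw (\<lambda>i. (i * q) mod n) (coset_compl l) (coset_compl l)"
proof -
  have fin: "finite (coset_compl l)" unfolding coset_compl_def by simp
  have inj: "inj_on (\<lambda>i. (i * q) mod n) (coset_compl l)"
  proof (rule inj_onI)
    fix x y assume x: "x \<in> coset_compl l" and y: "y \<in> coset_compl l" and e: "(x * q) mod n = (y * q) mod n"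
    have "[x * q = y * q] (mod n)" using e by (simp add: cong_def)
    then have "[x = y] (mod n)" using coprime_n_q cong_mult_rcancel_nat coprime_commute by blast
    then show "x = y" using x y unfolding coset_compl_def by (simp add: cong_def)
  qed
  have sub: "(\<lambda>i. (i * q) mod n) ` coset_compl l \<subseteq> coset_compl l"
  proof
    fix y assume "y \<in> (\<lambda>i. (i * q) mod n) ` coset_compl l"
    then obtain x where x: "x \<in> coset_compl l" and y: "y = (x * q) mod n" by auto
    have yn: "y < n" using y n_pos by simp
    have "y \<notin> cyc_coset n q l"
    proof
      assume "y \<in> cyc_coset n q l"
      then have "in_coset l (int y)" using mem_cyc_coset_iff by blast
      moreover have "[int y = int x * int q ^ 1] (mod int n)" using y by (simp add: cong_def zmod_int)
      ultimately have "in_coset l (int x * int q ^ 1)" using in_coset_cong by metis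
      then have "in_coset l (int x)" by (rule in_coset_cancel)
      then have "x \<in> cyc_coset n q l" using x mem_cyc_coset_iff unfolding coset_compl_def by auto
      then show False using x unfolding coset_compl_def by auto
    qed
    then show "y \<in> coset_compl l" using yn unfolding coset_compl_def by auto
  qed
  show ?thesis unfolding bij_betw_def using inj endo_inj_surj[OF fin sub inj] by simp
qed

text \<open>The roots \<open>\<eta>^i\<close>, \<open>i \<notin> C_l\<close>, of \<open>gen l\<close> are permuted by \<open>x \<mapsto> x^q\<close>, so its coefficients lie in \<open>\<bbbF>_q\<close>.\<close>
lemma gen_inRn: "inRn 1 (gen l)"
proof (rule inRn_if_dft_frob_power[OF degree_gen])
  fix z
  have "(dft (gen l) z) ^ (q ^ 1) = (\<Prod>i\<in>coset_compl l. (\<eta> powi z - \<eta> ^ i) ^ (q ^ 1))"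
    unfolding gen_eq_prod dft_prod_root_factor by (rule prod_power_distrib)
  also have "\<dots> = (\<Prod>i\<in>coset_compl l. \<eta> powi (z * int (q ^ 1)) - \<eta> ^ ((i * q) mod n))"
  proof (rule prod.cong[OF refl])
    fix i
    have "(\<eta> powi z - \<eta> ^ i) ^ (q ^ 1) = (\<eta> powi z) ^ (q ^ 1) - (\<eta> ^ i) ^ (q ^ 1)" by (rule qpow_diff)
    also have "(\<eta> powi z) ^ (q ^ 1) = \<eta> powi (z * int (q ^ 1))" by (rule eta_powi_pow)
    also have "(\<eta> ^ i) ^ (q ^ 1) = \<eta> ^ ((i * q) mod n)" by (simp add: power_mult[symmetric] eta_pow_mod[of "i*q"])
    finally show "(\<eta> powi z - \<eta> ^ i) ^ (q ^ 1) = \<eta> powi (z * int (q ^ 1)) - \<eta> ^ ((i * q) mod n)" .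
  qed
  also have "\<dots> = (\<Prod>i\<in>coset_compl l. \<eta> powi (z * int (q ^ 1)) - \<eta> ^ i)"
    using prod.reindex_bij_betw[OF bij_mult_q_coset_compl[of l], of "\<lambda>i. \<eta> powi (z * int (q ^ 1)) - \<eta> ^ i"] by simp
  also have "\<dots> = dft (gen l) (z * int (q ^ 1))" unfolding gen_eq_prod dft_prod_root_factor ..
  finally show "dft (gen l) (z * int (q ^ 1)) = dft (gen l) z ^ q ^ 1" by simp
qed

definition supported :: "nat \<Rightarrow> 'a poly \<Rightarrow> bool" where
  "supported l a \<longleftrightarrow> (\<forall>z. \<not> in_coset l z \<longrightarrow> dft a z = 0)"

lemma supported_rmul: "supported l a \<Longrightarrow> supported l (rmul n a b)" unfolding supported_def by (simp add: dft_rmul)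
lemma supported_diff: "supported l a \<Longrightarrow> supported l b \<Longrightarrow> supported l (a - b)" unfolding supported_def by (simp add: dft_diff)
lemma supported_smult: "supported l a \<Longrightarrow> supported l (smult c a)" unfolding supported_def by (simp add: dft_smult)
lemma supported_sum: "(\<And>i. i \<in> A \<Longrightarrow> supported l (f i)) \<Longrightarrow> supported l (sum f A)"
  unfolding supported_def by (simp add: dft_sum)
lemma supported_gen: "supported l (gen l)" unfolding supported_def using dft_gen_eq_0 by simp

abbreviation K :: "nat \<Rightarrow> 'a poly set" where "K l \<equiv> Kideal \<eta> n q l"
abbreviation J :: "nat \<Rightarrow> 'a poly set" where "J l \<equiv> Jideal \<eta> n q t l"

lemma K_eq: "K l = {rmul n (gen l) a | a. inRn 1 a}"
  unfolding Kideal_def gen_ideal_def gen_def by simp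
lemma J_eq: "J l = {rmul n (gen l) a | a. inRn t a}"
  unfolding Jideal_def gen_ideal_def gen_def by simp

lemma K_inRn: "u \<in> K l \<Longrightarrow> inRn 1 u"
  unfolding K_eq using inRn_rmul gen_inRn by blast
lemma J_inRn: "u \<in> J l \<Longrightarrow> inRn t u"
  unfolding J_eq using inRn_rmul inRn_mono[OF gen_inRn] by blast
lemma K_supported: "u \<in> K l \<Longrightarrow> supported l u"
  unfolding K_eq using supported_rmul supported_gen by blast
lemma J_supported: "u \<in> J l \<Longrightarrow> supported l u"
  unfolding J_eq using supported_rmul supported_gen by blast
lemma degree_K: "u \<in> K l \<Longrightarrow> degree u < n" using K_inRn inRn_deg by blast
lemma degree_J: "u \<in> J l \<Longrightarrow> degree u < n" using J_inRn inRn_deg by blast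

lemma K_rmul: "inRn 1 c \<Longrightarrow> u \<in> K l \<Longrightarrow> rmul n c u \<in> K l"
proof -
  assume c: "inRn 1 c" and "u \<in> K l"
  then obtain d where d: "inRn 1 d" "u = rmul n (gen l) d" unfolding K_eq by auto
  have "rmul n c u = rmul n (gen l) (rmul n c d)" unfolding d(2)
    by (metis rmul_assoc rmul_comm)
  then show ?thesis unfolding K_eq using inRn_rmul[OF c d(1)] by blast
qed
lemma J_rmul: "inRn t c \<Longrightarrow> u \<in> J l \<Longrightarrow> rmul n c u \<in> J l"
proof -
  assume c: "inRn t c" and "u \<in> J l"
  then obtain d where d: "inRn t d" "u = rmul n (gen l) d" unfolding J_eq by auto
  have "rmul n c u = rmul n (gen l) (rmul n c d)" unfolding d(2)
    by (metis rmul_assoc rmul_comm)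
  then show ?thesis unfolding J_eq using inRn_rmul[OF c d(1)] by blast
qed

lemma K_I: "inRn 1 a \<Longrightarrow> rmul n (gen l) a \<in> K l" unfolding K_eq by blast
lemma K_E: "u \<in> K l \<Longrightarrow> (\<And>a. inRn 1 a \<Longrightarrow> u = rmul n (gen l) a \<Longrightarrow> P) \<Longrightarrow> P"
  unfolding K_eq by blast

lemma K_uminus: "u \<in> K l \<Longrightarrow> - u \<in> K l"
proof -
  assume "u \<in> K l"
  then obtain a where a: "inRn 1 a" "u = rmul n (gen l) a" by (metis K_E)
  then have "- u = rmul n (gen l) (- a)" by (simp add: rmul_minus)
  then show ?thesis using K_I[OF inRn_uminus[OF a(1)]] by simp
qed
lemma K_zero: "0 \<in> K l" using K_I[OF inRn_0, of l] by (simp add: rmul_0)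
lemma gen_in_K: "gen l \<in> K l" using K_I[OF inRn_1, of l] rmul_1[OF degree_gen] by simp

lemma finite_K: "finite (K l)"
  using finite_subset[OF _ finite_degree_less] degree_K by blast

lemma inj_on_rmul_gen: "inj_on (rmul n (gen l)) (K l)"
proof (rule inj_onI)
  fix u v assume u: "u \<in> K l" and v: "v \<in> K l" and e: "rmul n (gen l) u = rmul n (gen l) v"
  show "u = v"
  proof (rule dft_eqI[OF degree_K[OF u] degree_K[OF v]])
    fix z
    have "dft (gen l) z * dft u z = dft (gen l) z * dft v z" using e by (metis dft_rmul)
    then show "dft u z = dft v z"
      using K_supported[OF u] K_supported[OF v] dft_gen_eq_0[of l z] unfolding supported_def by auto
  qed
qed

lemma ex_idem: "\<exists>E\<in>K l. rmul n (gen l) E = gen l"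
proof -
  have sub: "rmul n (gen l) ` K l \<subseteq> K l" using K_rmul[OF gen_inRn] by blast
  have "rmul n (gen l) ` K l = K l" by (rule endo_inj_surj[OF finite_K sub inj_on_rmul_gen])
  then show ?thesis using gen_in_K[of l] by (metis imageE)
qed

definition idem :: "nat \<Rightarrow> 'a poly" where "idem l = (SOME E. E \<in> K l \<and> rmul n (gen l) E = gen l)"

lemma idem_in_K: "idem l \<in> K l"
  and rmul_gen_idem: "rmul n (gen l) (idem l) = gen l"
  using someI_ex[OF ex_idem[of l, unfolded Bex_def]] unfolding idem_def by auto

lemma dft_idem: "dft (idem l) z = (if in_coset l z then 1 else 0)"
proof (cases "in_coset l z")
  case True
  have "dft (gen l) z * dft (idem l) z = dft (gen l) z * 1" using rmul_gen_idem by (metis dft_rmul mult_1_right)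
  then show ?thesis using True dft_gen_eq_0[of l z] by simp
next
  case False then show ?thesis using K_supported[OF idem_in_K] unfolding supported_def by simp
qed

lemma rmul_idem_supported: "degree a < n \<Longrightarrow> supported l a \<Longrightarrow> rmul n (idem l) a = a"
  by (rule dft_eqI[OF degree_rmul]) (auto simp: dft_rmul dft_idem supported_def)

lemma K_I_supported: "inRn 1 a \<Longrightarrow> supported l a \<Longrightarrow> a \<in> K l"
proof -
  assume a: "inRn 1 a" "supported l a"
  obtain d where d: "inRn 1 d" "idem l = rmul n (gen l) d" using idem_in_K unfolding K_eq by auto
  have "a = rmul n (idem l) a" using rmul_idem_supported[OF inRn_deg[OF a(1)] a(2)] by simp
  also have "\<dots> = rmul n (gen l) (rmul n d a)" unfolding d(2) by (rule rmul_assoc)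
  finally show ?thesis unfolding K_eq using inRn_rmul[OF d(1) a(1)] by blast
qed
lemma J_I_supported: "inRn t a \<Longrightarrow> supported l a \<Longrightarrow> a \<in> J l"
proof -
  assume a: "inRn t a" "supported l a"
  obtain d where d: "inRn 1 d" "idem l = rmul n (gen l) d" using idem_in_K unfolding K_eq by auto
  have "a = rmul n (idem l) a" using rmul_idem_supported[OF inRn_deg[OF a(1)] a(2)] by simp
  also have "\<dots> = rmul n (gen l) (rmul n d a)" unfolding d(2) by (rule rmul_assoc)
  finally show ?thesis unfolding J_eq using inRn_rmul[OF inRn_mono[OF d(1)] a(1)] by blast
qed
lemma K_subset_J: "u \<in> K l \<Longrightarrow> u \<in> J l"
  using J_I_supported inRn_mono K_inRn K_supported by blast

lemma dft_K_neq_0: "u \<in> K l \<Longrightarrow> u \<noteq> 0 \<Longrightarrow> in_coset l z \<Longrightarrow> dft u z \<noteq> 0"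
proof
  assume u: "u \<in> K l" "u \<noteq> 0" and z: "in_coset l z" and s: "dft u z = 0"
  have "u = 0"
  proof (rule dft_eqI[OF degree_K[OF u(1)]])
    show "degree (0::'a poly) < n" using n_pos by simp
    fix z' show "dft u z' = dft 0 z'"
    proof (cases "in_coset l z'")
      case True
      obtain w where w: "[z' = z * int q ^ w] (mod int n)" using in_coset_orbit[OF True z] by auto
      have "dft u z' = dft u (z * int (q ^ w))" using dft_cong[OF w] by simp
      also have "\<dots> = (dft u z) ^ (q ^ w)" by (rule dft_frob_power[OF inRn_mono[OF K_inRn[OF u(1)]]])
      finally show ?thesis using s q_pos by (simp add: dft_zero)
    next
      case False then show ?thesis using K_supported[OF u(1)] unfolding supported_def by (simp add: dft_zero)
    qed
  qed
  then show False using u(2) by simp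
qed

lemma K_inverse: "u \<in> K l \<Longrightarrow> u \<noteq> 0 \<Longrightarrow> \<exists>v\<in>K l. rmul n v u = idem l"
proof -
  assume u: "u \<in> K l" "u \<noteq> 0"
  have inj: "inj_on (rmul n u) (K l)"
  proof (rule inj_onI)
    fix x y assume x: "x \<in> K l" and y: "y \<in> K l" and e: "rmul n u x = rmul n u y"
    show "x = y"
    proof (rule dft_eqI[OF degree_K[OF x] degree_K[OF y]])
      fix z
      have m: "dft u z * dft x z = dft u z * dft y z" using e by (metis dft_rmul)
      show "dft x z = dft y z"
      proof (cases "in_coset l z")
        case True then show ?thesis using m dft_K_neq_0[OF u True] by simp
      next
        case False then show ?thesis using K_supported[OF x] K_supported[OF y] unfolding supported_def by simp
      qed
    qed
  qed
  have sub: "rmul n u ` K l \<subseteq> K l" using K_rmul[OF K_inRn[OF u(1)]] by blast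
  have "rmul n u ` K l = K l" by (rule endo_inj_surj[OF finite_K sub inj])
  then obtain v where "v \<in> K l" "idem l = rmul n u v" using idem_in_K by (metis imageE)
  then show ?thesis using rmul_comm by metis
qed

lemma ident_K: "ident n (K l) = idem l"
  unfolding ident_def
proof (rule the_equality)
  show "idem l \<in> K l \<and> (\<forall>u\<in>K l. rmul n (idem l) u = u)"
    using idem_in_K rmul_idem_supported degree_K K_supported by blast
  fix e assume e: "e \<in> K l \<and> (\<forall>u\<in>K l. rmul n e u = u)"
  then have "rmul n e (idem l) = idem l" using idem_in_K by blast
  moreover have "rmul n (idem l) e = e" using rmul_idem_supported degree_K K_supported e by blast
  ultimately show "e = idem l" using rmul_comm by metis
qed

lemma idem_neq_0: "idem l \<noteq> 0"
proof
  assume "idem l = 0"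
  then have "dft (idem l) (int l) = 0" by (simp add: dft_zero)
  moreover have "in_coset l (int l)" unfolding in_coset_def by (intro exI[of _ 0]) simp
  ultimately show False using dft_idem by simp
qed

lemma rmul_idem_J: "a \<in> J m \<Longrightarrow> rmul n (idem m) a = a"
  by (rule rmul_idem_supported[OF degree_J J_supported])

lemma kdim_obtains_independent_pair:
  assumes "kdim n (K m) A d" and "2 \<le> d"
  obtains \<beta>0 \<beta>1 where "\<beta>0 \<in> A" and "\<beta>1 \<in> A" and "\<beta>0 \<noteq> 0"
    and "\<And>c0 c1. c0 \<in> K m \<Longrightarrow> c1 \<in> K m \<Longrightarrow> rmul n c0 \<beta>0 + rmul n c1 \<beta>1 = 0 \<Longrightarrow> c0 = 0 \<and> c1 = 0"
proof -
  obtain \<beta> where \<beta>: "\<forall>j<d. \<beta> j \<in> A"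
    and indep: "\<forall>c. (\<forall>j<d. c j \<in> K m) \<longrightarrow> (\<Sum>j<d. rmul n (c j) (\<beta> j)) = 0 \<longrightarrow> (\<forall>j<d. c j = 0)"
    using assms(1) unfolding kdim_def by blast
  have pair: "c0 = 0 \<and> c1 = 0"
    if c: "c0 \<in> K m" "c1 \<in> K m" and s: "rmul n c0 (\<beta> 0) + rmul n c1 (\<beta> 1) = 0" for c0 c1
  proof -
    let ?c = "\<lambda>j. if j = 0 then c0 else if j = 1 then c1 else 0"
    have "(\<Sum>j<d. rmul n (?c j) (\<beta> j)) = (\<Sum>j\<in>{0, 1}. rmul n (?c j) (\<beta> j))"
      by (rule sum.mono_neutral_right) (use assms(2) in \<open>auto simp: rmul_0_left\<close>)
    then have s0: "(\<Sum>j<d. rmul n (?c j) (\<beta> j)) = 0" using s by simp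
    have cK: "\<forall>j<d. ?c j \<in> K m" using c K_zero by simp
    have all0: "\<forall>j<d. ?c j = 0" by (rule mp[OF mp[OF spec[OF indep, of ?c] cK] s0])
    show ?thesis using spec[OF all0, of 0] spec[OF all0, of 1] assms(2) by simp
  qed
  have "\<beta> 0 \<noteq> 0"
  proof
    assume "\<beta> 0 = 0"
    then have "rmul n (idem m) (\<beta> 0) + rmul n 0 (\<beta> 1) = 0" by (simp add: rmul_0 rmul_0_left)
    then show False using pair[OF idem_in_K K_zero] idem_neq_0 by blast
  qed
  moreover have "\<beta> 0 \<in> A" "\<beta> 1 \<in> A" using \<beta> assms(2) by auto
  ultimately show thesis using that pair by blast
qed

lemma kdim_1_multiple:
  assumes "ksubspace n (K m) (J m) A" and "kdim n (K m) A 1"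
    and "a \<in> A" and "a \<noteq> 0" and "x \<in> A"
  shows "\<exists>u\<in>K m. x = rmul n u a"
proof -
  obtain \<alpha> where \<alpha>: "\<forall>i<1. \<alpha> i \<in> A"
    and span: "A = {(\<Sum>i<1. rmul n (c i) (\<alpha> (i::nat))) | c. \<forall>i<1. c i \<in> K m}"
    using assms(2) unfolding kdim_def by blast
  have multiple: "\<exists>c\<in>K m. y = rmul n c (\<alpha> 0)" if "y \<in> A" for y
    using that unfolding span by auto
  obtain c0 where c0: "c0 \<in> K m" "a = rmul n c0 (\<alpha> 0)" using multiple[OF assms(3)] by blast
  then have "c0 \<noteq> 0" using assms(4) rmul_0_left by auto
  then obtain z where z: "z \<in> K m" "rmul n z c0 = idem m" using K_inverse[OF c0(1)] by blast
  obtain c where c: "c \<in> K m" "x = rmul n c (\<alpha> 0)" using multiple[OF assms(5)] by blast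
  have "\<alpha> 0 \<in> A" using \<alpha> by simp
  then have "\<alpha> 0 \<in> J m" using assms(1) unfolding ksubspace_def by blast
  have "x = rmul n c (rmul n (rmul n z c0) (\<alpha> 0))" using c(2) z(2) rmul_idem_J[OF \<open>\<alpha> 0 \<in> J m\<close>] by simp
  also have "\<dots> = rmul n (rmul n c z) a" unfolding c0(2) by (simp only: rmul_assoc)
  finally show ?thesis using K_rmul[OF K_inRn[OF c(1)] z(1)] by blast
qed

section \<open>Conjugation, Frobenius and trace\<close>

definition bar :: "'a poly \<Rightarrow> 'a poly" where "bar a = tau n 1 (-1) a"
definition frob :: "nat \<Rightarrow> 'a poly \<Rightarrow> 'a poly" where "frob w a = tau n (q ^ w) 1 a"

lemma dft_bar: "degree a < n \<Longrightarrow> dft (bar a) z = dft a (- z)"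
  using dft_tau[of a 0 "-1" z] unfolding bar_def by simp

lemma dft_frob: "degree a < n \<Longrightarrow> dft (frob w a) (z * int (q ^ w)) = (dft a z) ^ (q ^ w)"
  using dft_tau[of a w 1 z] unfolding frob_def by simp

lemma degree_bar: "degree (bar a) < n" unfolding bar_def by (rule degree_tau)
lemma degree_frob: "degree (frob w a) < n" unfolding frob_def by (rule degree_tau)

lemma bar_bar: "degree a < n \<Longrightarrow> bar (bar a) = a"
proof -
  assume a: "degree a < n"
  show ?thesis by (rule dft_eqI[OF degree_bar a]) (simp only: dft_bar[OF degree_bar] dft_bar[OF a] minus_minus)
qed

lemma bar_rmul: "degree a < n \<Longrightarrow> degree b < n \<Longrightarrow> bar (rmul n a b) = rmul n (bar a) (bar b)"
proof -
  assume a: "degree a < n" and b: "degree b < n"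
  show ?thesis
    by (rule dft_eqI[OF degree_bar degree_rmul]) (simp only: dft_bar[OF degree_rmul] dft_rmul dft_bar[OF a] dft_bar[OF b])
qed

lemma bar_add: "bar (a + b) = bar a + bar b"
  using tau_add[of 0 "-1" a b] unfolding bar_def by simp
lemma bar_zero: "bar 0 = 0" using tau_0[of 0 "-1"] unfolding bar_def by simp
lemma bar_uminus: "bar (- a) = - bar a"
  using bar_add[of a "- a"] bar_zero by (simp add: eq_neg_iff_add_eq_0 add.commute)
lemma bar_diff: "bar (a - b) = bar a - bar b"
  using bar_add[of a "- b"] bar_uminus[of b] by simp

lemma frob_add: "frob w (a + b) = frob w a + frob w b" unfolding frob_def by (rule tau_add)
lemma frob_zero: "frob w 0 = 0" unfolding frob_def by (rule tau_0)
lemma frob_uminus: "frob w (- a) = - frob w a"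
  using frob_add[of w a "- a"] frob_zero[of w] by (simp add: eq_neg_iff_add_eq_0 add.commute)
lemma frob_diff: "frob w (a - b) = frob w a - frob w b"
  using frob_add[of w a "- b"] frob_uminus[of w b] by simp
lemma frob_sum: "frob w (sum f A) = (\<Sum>i\<in>A. frob w (f i))"
  by (induction A rule: infinite_finite_induct) (simp_all add: frob_zero frob_add)
lemma bar_sum: "bar (sum f A) = (\<Sum>i\<in>A. bar (f i))"
  by (induction A rule: infinite_finite_induct) (simp_all add: bar_zero bar_add)

lemma frob_rmul: "degree a < n \<Longrightarrow> degree b < n \<Longrightarrow> frob w (rmul n a b) = rmul n (frob w a) (frob w b)"
proof -
  assume a: "degree a < n" and b: "degree b < n"
  show ?thesis by (rule dft_eqI_frob[OF degree_frob degree_rmul, where w=w])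
     (simp only: dft_frob[OF degree_rmul] dft_rmul dft_frob[OF a] dft_frob[OF b] power_mult_distrib)
qed

lemma ex_q_power_preimage: "\<exists>z'. [z = z' * int (q ^ w)] (mod int n)"
  using cong_sym[OF mult_q_power_inverse_cong[of z w]] by blast

lemma supported_frob: "degree c < n \<Longrightarrow> supported l c \<Longrightarrow> supported l (frob w c)"
  unfolding supported_def
proof (intro allI impI)
  fix z assume c: "degree c < n" "\<forall>z. \<not> in_coset l z \<longrightarrow> dft c z = 0" and z: "\<not> in_coset l z"
  obtain z' where z': "[z = z' * int (q ^ w)] (mod int n)" using ex_q_power_preimage by blast
  have "\<not> in_coset l z'"
  proof
    assume "in_coset l z'"
    then have "in_coset l (z' * int q ^ w)" by (rule in_coset_mult)
    then show False using z in_coset_cong[OF z', of l] by simp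
  qed
  then have "dft c z' = 0" using c(2) by blast
  have "dft (frob w c) z = dft (frob w c) (z' * int (q ^ w))" by (rule dft_cong[OF z'])
  also have "\<dots> = (dft c z') ^ (q ^ w)" by (rule dft_frob[OF c(1)])
  finally show "dft (frob w c) z = 0" using \<open>dft c z' = 0\<close> q_pos by simp
qed

lemma supported_bar: "degree a < n \<Longrightarrow> supported l a \<Longrightarrow> supported (negmod n l) (bar a)"
  unfolding supported_def by (simp add: dft_bar in_coset_negmod)
lemma supported_bar_negmod: "degree a < n \<Longrightarrow> supported (negmod n l) a \<Longrightarrow> supported l (bar a)"
  unfolding supported_def by (simp add: dft_bar in_coset_negmod)

lemma frob_bar: "degree c < n \<Longrightarrow> frob w (bar c) = bar (frob w c)"
proof -
  assume c: "degree c < n"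
  show ?thesis
  proof (rule dft_eqI_frob[OF degree_frob degree_bar, where w=w])
    fix z
    have "dft (frob w (bar c)) (z * int (q ^ w)) = (dft c (- z)) ^ (q ^ w)"
      by (simp only: dft_frob[OF degree_bar] dft_bar[OF c])
    moreover have "dft (bar (frob w c)) (z * int (q ^ w)) = (dft c (- z)) ^ (q ^ w)"
      using dft_bar[OF degree_frob, of w c "z * int (q ^ w)"] dft_frob[OF c, of w "- z"] by simp
    ultimately show "dft (frob w (bar c)) (z * int (q ^ w)) = dft (bar (frob w c)) (z * int (q ^ w))" by simp
  qed
qed

lemma tau_neg_eq_frob_bar: "degree c < n \<Longrightarrow> tau n (q ^ w) (-1) c = frob w (bar c)"
proof -
  assume c: "degree c < n"
  show ?thesis
  proof (rule dft_eqI_frob[OF degree_tau degree_frob, where w=w])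
    fix z
    show "dft (tau n (q ^ w) (-1) c) (z * int (q ^ w)) = dft (frob w (bar c)) (z * int (q ^ w))"
      using dft_tau[OF c, of w "-1" z] dft_frob[OF degree_bar, of w c z] dft_bar[OF c, of z] by simp
  qed
qed

lemma frob_0_exp: "degree c < n \<Longrightarrow> frob 0 c = c"
proof -
  assume c: "degree c < n"
  show ?thesis by (rule dft_eqI[OF degree_frob c]) (use dft_frob[OF c, of 0] in simp)
qed

lemma frob_inRn_1: "inRn 1 u \<Longrightarrow> frob w u = u"
  unfolding frob_def by (rule tau_frob_id[OF inRn_mono])

lemma frob_smult: "degree c < n \<Longrightarrow> frob w (smult g c) = smult (g ^ (q ^ w)) (frob w c)"
proof -
  assume c: "degree c < n"
  have d: "degree (smult g c) < n" using c degree_smult_le le_less_trans by blast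
  have d2: "degree (smult (g ^ (q ^ w)) (frob w c)) < n" using degree_frob degree_smult_le le_less_trans by blast
  show ?thesis
  proof (rule dft_eqI_frob[OF degree_frob d2, where w=w])
    fix z
    show "dft (frob w (smult g c)) (z * int (q ^ w)) = dft (smult (g ^ (q ^ w)) (frob w c)) (z * int (q ^ w))"
      by (simp only: dft_frob[OF d] dft_smult dft_frob[OF c] power_mult_distrib)
  qed
qed

lemma coeff_frob: "coeff (frob w c) j = (if j < n then coeff c j ^ (q ^ w) else 0)"
  unfolding frob_def by (rule coeff_tau_1)

lemma frob_frob: "frob w (frob s c) = frob (w + s) c"
  by (rule poly_eqI) (simp add: coeff_frob power_mult[symmetric] power_add mult.commute)

lemma qpow_period: "x ^ (q ^ t) = (x::'a) \<Longrightarrow> x ^ (q ^ y) = x ^ (q ^ (y mod t))"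
proof -
  assume x: "x ^ (q ^ t) = x"
  have "x ^ (q ^ y) = x ^ (q ^ (t * (y div t) + y mod t))" by simp
  also have "\<dots> = (x ^ (q ^ (t * (y div t)))) ^ (q ^ (y mod t))" by (simp only: power_add power_mult)
  also have "x ^ (q ^ (t * (y div t))) = x" by (rule power_q_power_iterate[OF x])
  finally show ?thesis .
qed

lemma frob_period: "inRn t c \<Longrightarrow> frob y c = frob (y mod t) c"
proof (rule poly_eqI)
  fix j assume c: "inRn t c"
  have "coeff c j ^ q ^ y = coeff c j ^ q ^ (y mod t)" by (rule qpow_period[OF inRn_coeff[OF c]])
  then show "coeff (frob y c) j = coeff (frob (y mod t) c) j" by (simp only: coeff_frob)
qed

definition trace :: "'a poly \<Rightarrow> 'a poly" where "trace c = (\<Sum>w<t. frob w c)"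

lemma degree_trace: "degree (trace c) < n"
  unfolding trace_def by (rule degree_lessI[OF disjI2[OF n_pos]]) (simp add: coeff_sum coeff_frob)
lemma trace_add: "trace (a + b) = trace a + trace b" unfolding trace_def by (simp add: frob_add sum.distrib)
lemma trace_zero: "trace 0 = 0" unfolding trace_def by (simp add: frob_zero)
lemma trace_uminus: "trace (- a) = - trace a" unfolding trace_def by (simp add: frob_uminus sum_negf)
lemma trace_diff: "trace (a - b) = trace a - trace b" unfolding trace_def by (simp add: frob_diff sum_subtractf)
lemma supported_trace: "degree c < n \<Longrightarrow> supported l c \<Longrightarrow> supported l (trace c)"
  unfolding trace_def by (intro supported_sum supported_frob)
lemma bar_trace: "degree c < n \<Longrightarrow> bar (trace c) = trace (bar c)"
  unfolding trace_def by (simp add: bar_sum frob_bar)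
lemma trace_rmul: "inRn 1 u \<Longrightarrow> degree c < n \<Longrightarrow> trace (rmul n u c) = rmul n u (trace c)"
proof -
  assume u: "inRn 1 u" and c: "degree c < n"
  have "frob w (rmul n u c) = rmul n u (frob w c)" for w
    using frob_rmul[OF inRn_deg[OF u] c, of w] frob_inRn_1[OF u, of w] by simp
  then show ?thesis unfolding trace_def by (simp add: rmul_sum)
qed

lemma sum_lessThan_shift_periodic: "(\<And>y. f y = f (y mod t)) \<Longrightarrow> (\<Sum>w<t. f (w + s)) = (\<Sum>w<t. f w)"
proof -
  assume f: "\<And>y. f y = f (y mod t)"
  have bij: "bij_betw (\<lambda>w. (w + s) mod t) {..<t} {..<t}"
  proof -
    have inj: "inj_on (\<lambda>w. (w + s) mod t) {..<t}"
    proof (rule inj_onI)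
      fix x y assume x: "x \<in> {..<t}" and y: "y \<in> {..<t}" and e: "(x + s) mod t = (y + s) mod t"
      have "[x + s = y + s] (mod t)" using e by (simp add: cong_def)
      then have "[x = y] (mod t)" by (simp add: cong_add_rcancel_nat)
      then show "x = y" using x y by (simp add: cong_def)
    qed
    have sub: "(\<lambda>w. (w + s) mod t) ` {..<t} \<subseteq> {..<t}" using t_pos by auto
    show ?thesis unfolding bij_betw_def using inj endo_inj_surj[OF _ sub inj] by simp
  qed
  have "(\<Sum>w<t. f (w + s)) = (\<Sum>w<t. f ((w + s) mod t))" using f by simp
  also have "\<dots> = (\<Sum>w<t. f w)" by (rule sum.reindex_bij_betw[OF bij])
  finally show ?thesis .
qed

lemma trace_frob: "inRn t c \<Longrightarrow> trace (frob s c) = trace c"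
proof -
  assume c: "inRn t c"
  have "trace (frob s c) = (\<Sum>w<t. frob (w + s) c)" unfolding trace_def by (simp add: frob_frob)
  also have "\<dots> = trace c" unfolding trace_def by (rule sum_lessThan_shift_periodic) (rule frob_period[OF c])
  finally show ?thesis .
qed

lemma inRn_if_frob_fixed: "degree x < n \<Longrightarrow> frob w x = x \<Longrightarrow> inRn w x"
proof -
  assume d: "degree x < n" and f: "frob w x = x"
  have "coeff x j ^ (q ^ w) = coeff x j" for j
  proof (cases "j < n")
    case True then show ?thesis using arg_cong[OF f, of "\<lambda>p. coeff p j"] by (simp add: coeff_frob)
  next
    case False then have "coeff x j = 0" using d by (intro coeff_eq_0) simp
    then show ?thesis using q_pos by simp
  qed
  then show ?thesis using d unfolding Rn_def subF_def by simp
qed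

lemma trace_inRn: "inRn t c \<Longrightarrow> inRn 1 (trace c)"
proof -
  assume c: "inRn t c"
  have "frob 1 (trace c) = trace (frob 1 c)" unfolding trace_def by (simp add: frob_sum frob_frob add.commute)
  also have "\<dots> = trace c" by (rule trace_frob[OF c])
  finally show ?thesis by (rule inRn_if_frob_fixed[OF degree_trace])
qed

lemma rmul_supported_disjoint: "cyc_coset n q l \<noteq> cyc_coset n q l' \<Longrightarrow> supported l x \<Longrightarrow> supported l' y \<Longrightarrow> rmul n x y = 0"
  by (rule dft_eqI[OF degree_rmul]) (use n_pos in_coset_disjoint[of l l'] in \<open>auto simp: dft_rmul supported_def dft_zero\<close>)

lemma degree_smult_less: "degree a < n \<Longrightarrow> degree (smult g a) < n"
  using degree_smult_le le_less_trans by blast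

lemma bar_smult: "degree a < n \<Longrightarrow> bar (smult g a) = smult g (bar a)"
proof -
  assume a: "degree a < n"
  show ?thesis by (rule dft_eqI[OF degree_bar degree_smult_less[OF degree_bar]])
    (simp only: dft_bar[OF degree_smult_less[OF a]] dft_smult dft_bar[OF a])
qed

lemma bar_inRn: "inRn w a \<Longrightarrow> inRn w (bar a)" unfolding bar_def by (rule inRn_tau)
lemma frob_inRn: "inRn w a \<Longrightarrow> inRn w (frob s a)" unfolding frob_def by (rule inRn_tau)

lemma supported_bar_J: "a \<in> J m \<Longrightarrow> supported (negmod n m) (bar a)"
  by (rule supported_bar[OF degree_J J_supported])

lemma supported_bar_J_negmod: "b \<in> J (negmod n m) \<Longrightarrow> supported m (bar b)"
  by (rule supported_bar_negmod[OF degree_J J_supported])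

lemma bar_K: "u \<in> K m \<Longrightarrow> bar u \<in> K (negmod n m)"
  by (rule K_I_supported[OF bar_inRn[OF K_inRn] supported_bar[OF degree_K K_supported]])

lemma bar_idem: "bar (idem m) = idem (negmod n m)"
proof (rule dft_eqI[OF degree_bar degree_K[OF idem_in_K]])
  fix z show "dft (bar (idem m)) z = dft (idem (negmod n m)) z"
    by (simp add: dft_bar[OF degree_K[OF idem_in_K]] dft_idem in_coset_negmod)
qed

lemma bar_idem_negmod: "bar (idem (negmod n m)) = idem m"
  using bar_idem[of m] bar_bar[OF degree_K[OF idem_in_K[of m]]] by simp

section \<open>The three forms\<close>

lemma form0_eq_trace: "form0 n q t a b = trace (rmul n a (bar b))"
  unfolding form0_def trace_def frob_def bar_def ..

lemma sum_tau_neg_eq: "degree b < n \<Longrightarrow> (\<Sum>w\<in>{1..<t}. tau n (q ^ w) (-1) b) = trace (bar b) - bar b"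
proof -
  assume b: "degree b < n"
  have "(\<Sum>w\<in>{1..<t}. tau n (q ^ w) (-1) b) = (\<Sum>w\<in>{1..<t}. frob w (bar b))"
    using tau_neg_eq_frob_bar[OF b] by simp
  moreover have "trace (bar b) = frob 0 (bar b) + (\<Sum>w\<in>{1..<t}. frob w (bar b))"
  proof -
    have "{..<t} = insert 0 {1..<t}" using t_pos by auto
    then show ?thesis unfolding trace_def by simp
  qed
  ultimately show ?thesis using frob_0_exp[OF degree_bar] by simp
qed

lemma form_star_eq_trace: "degree b < n \<Longrightarrow> form_star n q t a b = trace (rmul n a (trace (bar b) - bar b))"
  unfolding form_star_def sum_tau_neg_eq trace_def frob_def ..

lemma form_gamma_eq_trace: "degree b < n \<Longrightarrow> form_gamma n q t g a b = trace (rmul n (smult g a) (frob (t div 2) (bar b)))"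
  unfolding form_gamma_def trace_def by (simp add: tau_neg_eq_frob_bar frob_def)

lemma form0_add_left: "form0 n q t ((x::'a poly) + y) z = form0 n q t x z + form0 n q t y z"
  unfolding form0_eq_trace by (simp add: rmul_add_left trace_add)
lemma form0_add_right: "form0 n q t (x::'a poly) (y + z) = form0 n q t x y + form0 n q t x z"
  unfolding form0_eq_trace by (simp add: bar_add rmul_add trace_add)
lemma form_star_add_left: "form_star n q t ((x::'a poly) + y) z = form_star n q t x z + form_star n q t y z"
  unfolding form_star_def by (simp add: rmul_add_left tau_add sum.distrib)
lemma form_star_add_right: "form_star n q t (x::'a poly) (y + z) = form_star n q t x y + form_star n q t x z"
  unfolding form_star_def by (simp add: rmul_add tau_add sum.distrib)
lemma form_gamma_add_left: "form_gamma n q t g ((x::'a poly) + y) z = form_gamma n q t g x z + form_gamma n q t g y z"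
  unfolding form_gamma_def by (simp add: rmul_add_left tau_add sum.distrib smult_add_right)
lemma form_gamma_add_right: "form_gamma n q t g (x::'a poly) (y + z) = form_gamma n q t g x y + form_gamma n q t g x z"
  unfolding form_gamma_def by (simp add: rmul_add tau_add sum.distrib)
lemma form_gammaH_add_left: "form_gammaH n q t g th ((x::'a poly) + y) z = form_gammaH n q t g th x z + form_gammaH n q t g th y z"
  unfolding form_gammaH_def by (simp add: form_gamma_add_left rmul_add)
lemma form_gammaH_add_right: "form_gammaH n q t g th (x::'a poly) (y + z) = form_gammaH n q t g th x y + form_gammaH n q t g th x z"
  unfolding form_gammaH_def by (simp add: form_gamma_add_right rmul_add)

lemma form0_swap: "degree a < n \<Longrightarrow> degree b < n \<Longrightarrow> form0 n q t b a = bar (form0 n q t a b)"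
proof -
  assume a: "degree a < n" and b: "degree b < n"
  have "bar (form0 n q t a b) = trace (bar (rmul n a (bar b)))" unfolding form0_eq_trace by (rule bar_trace[OF degree_rmul])
  also have "bar (rmul n a (bar b)) = rmul n (bar a) b" by (simp add: bar_rmul[OF a degree_bar] bar_bar[OF b])
  finally show ?thesis unfolding form0_eq_trace by (simp add: rmul_comm)
qed

lemma form0_rmul_left: "inRn 1 u \<Longrightarrow> form0 n q t (rmul n u a) b = rmul n u (form0 n q t a b)"
  unfolding form0_eq_trace by (simp add: rmul_assoc trace_rmul degree_rmul)

lemma form0_rmul_right: "inRn 1 v \<Longrightarrow> degree b < n \<Longrightarrow> form0 n q t a (rmul n v b) = rmul n (bar v) (form0 n q t a b)"
proof -
  assume v: "inRn 1 v" and b: "degree b < n"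
  have "rmul n a (bar (rmul n v b)) = rmul n (bar v) (rmul n a (bar b))"
    using bar_rmul[OF inRn_deg[OF v] b] by (metis rmul_assoc rmul_comm)
  then show ?thesis unfolding form0_eq_trace using trace_rmul[OF bar_inRn[OF v] degree_rmul] by simp
qed

lemma form_star_eq_trace_product: "inRn t a \<Longrightarrow> inRn t b \<Longrightarrow> form_star n q t a b = rmul n (trace (bar b)) (trace a) - form0 n q t a b"
proof -
  assume a: "inRn t a" and b: "inRn t b"
  have T: "inRn 1 (trace (bar b))" by (rule trace_inRn[OF bar_inRn[OF b]])
  have "form_star n q t a b = trace (rmul n a (trace (bar b))) - trace (rmul n a (bar b))"
    unfolding form_star_eq_trace[OF inRn_deg[OF b]] by (simp add: rmul_diff trace_diff)
  also have "trace (rmul n a (trace (bar b))) = rmul n (trace (bar b)) (trace a)"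
    using trace_rmul[OF T inRn_deg[OF a]] by (simp add: rmul_comm)
  finally show ?thesis unfolding form0_eq_trace .
qed

lemma form_star_swap: "inRn t a \<Longrightarrow> inRn t b \<Longrightarrow> form_star n q t b a = bar (form_star n q t a b)"
proof -
  assume a: "inRn t a" and b: "inRn t b"
  have da: "degree a < n" and db: "degree b < n" using a b inRn_deg by auto
  have "bar (form_star n q t a b) = bar (rmul n (trace (bar b)) (trace a)) - bar (form0 n q t a b)"
    unfolding form_star_eq_trace_product[OF a b] by (rule bar_diff)
  also have "bar (rmul n (trace (bar b)) (trace a)) = rmul n (trace b) (trace (bar a))"
    by (simp add: bar_rmul[OF degree_trace degree_trace] bar_trace[OF degree_bar] bar_trace[OF da] bar_bar[OF db])
  also have "bar (form0 n q t a b) = form0 n q t b a" by (rule form0_swap[OF da db, symmetric])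
  finally show ?thesis unfolding form_star_eq_trace_product[OF b a] by (simp add: rmul_comm)
qed

lemma form_star_rmul_left: "inRn 1 u \<Longrightarrow> degree b < n \<Longrightarrow> form_star n q t (rmul n u a) b = rmul n u (form_star n q t a b)"
  unfolding form_star_eq_trace by (simp add: rmul_assoc trace_rmul degree_rmul)

lemma form_star_rmul_right: "inRn 1 v \<Longrightarrow> degree b < n \<Longrightarrow> form_star n q t a (rmul n v b) = rmul n (bar v) (form_star n q t a b)"
proof -
  assume v: "inRn 1 v" and b: "degree b < n"
  have iv: "inRn 1 (bar v)" by (rule bar_inRn[OF v])
  have "trace (bar (rmul n v b)) - bar (rmul n v b) = rmul n (bar v) (trace (bar b) - bar b)"
    using bar_rmul[OF inRn_deg[OF v] b] trace_rmul[OF iv degree_bar] by (simp add: rmul_diff)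
  then have "rmul n a (trace (bar (rmul n v b)) - bar (rmul n v b)) = rmul n (bar v) (rmul n a (trace (bar b) - bar b))"
    by (metis rmul_assoc rmul_comm)
  then show ?thesis unfolding form_star_eq_trace[OF b] form_star_eq_trace[OF degree_rmul] using trace_rmul[OF iv degree_rmul] by simp
qed

lemma qpow_iterate_neg:
  assumes "g ^ (q ^ w) = - (g::'a)"
  shows "g ^ (q ^ (w * j)) = (if even j then g else - g)"
proof (induction j)
  case 0 then show ?case by simp
next
  case (Suc j)
  have "g ^ (q ^ (w * Suc j)) = (g ^ (q ^ (w * j))) ^ (q ^ w)"
    by (simp add: power_add power_mult[symmetric] mult.commute)
  also have "\<dots> = (if even j then - g else g)"
    using Suc assms qpow_uminus[of g w] by simp
  finally show ?case by simp
qed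

text \<open>With \<open>t = 2^e m\<close>, \<open>m\<close> odd, the defining property of \<open>\<gamma>\<close> propagates from \<open>q^(2^(e-1))\<close>
  to \<open>q^(t/2)\<close> because \<open>t/2\<close> is an odd multiple of \<open>2^(e-1)\<close>.\<close>
lemma gamma_power_half:
  assumes "even t" and "g + g ^ (q ^ (2 ^ (multiplicity 2 t - 1))) = 0"
  shows "g ^ (q ^ (t div 2)) = - (g::'a)"
proof -
  let ?e = "multiplicity 2 t"
  have "t \<noteq> 0" using t_pos by simp
  then obtain m where m: "t = 2 ^ ?e * m" "odd m"
    using multiplicity_decompose'[of t 2] by auto
  have "?e > 0" using multiplicity_gt_zero_iff[OF \<open>t \<noteq> 0\<close>, of 2] assms(1) by simp
  then have "t div 2 = 2 ^ (?e - 1) * m" using m(1) by (cases ?e) auto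
  moreover have "g ^ (q ^ 2 ^ (?e - 1)) = - g"
    using assms(2) by (simp add: eq_neg_iff_add_eq_0 add.commute)
  ultimately show ?thesis using qpow_iterate_neg m(2) by simp
qed

lemma gamma_in_subF:
  assumes "even t" and "g ^ (q ^ (t div 2)) = - g"
  shows "(g::'a) \<in> subF (q ^ t)"
proof -
  have "t = t div 2 + t div 2" using assms(1) by auto
  then have "g ^ (q ^ t) = (g ^ (q ^ (t div 2))) ^ (q ^ (t div 2))"
    by (metis power_add power_mult)
  also have "\<dots> = g" using assms(2) qpow_uminus[of g "t div 2"] by simp
  finally show ?thesis unfolding subF_def by simp
qed

lemma frob_half_frob_half:
  assumes "even t" and "inRn t c"
  shows "frob (t div 2) (frob (t div 2) c) = c"
proof -
  have "t div 2 + t div 2 = t" using assms(1) by (elim evenE) simp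
  then have "frob (t div 2) (frob (t div 2) c) = frob (t mod t) c"
    using frob_frob frob_period[OF assms(2)] by metis
  then show ?thesis using frob_0_exp[OF inRn_deg[OF assms(2)]] by simp
qed

lemma form_gamma_swap:
  assumes "even t" and gamma: "g ^ (q ^ (t div 2)) = - g" and a: "inRn t a" and b: "inRn t b"
  shows "form_gamma n q t g b a = - bar (form_gamma n q t g a b)"
proof -
  have da: "degree a < n" and db: "degree b < n" using a b inRn_deg by auto
  let ?s = "t div 2"
  let ?X = "rmul n (smult g b) (frob ?s (bar a))"
  have X: "inRn t ?X"
    by (rule inRn_rmul[OF inRn_smult[OF gamma_in_subF[OF assms(1,2)] b] frob_inRn[OF bar_inRn[OF a]]])
  have "form_gamma n q t g b a = trace ?X" by (rule form_gamma_eq_trace[OF da])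
  also have "\<dots> = trace (frob ?s ?X)" by (rule trace_frob[OF X, symmetric])
  also have "frob ?s ?X = rmul n (frob ?s (smult g b)) (frob ?s (frob ?s (bar a)))"
    by (rule frob_rmul[OF degree_smult_less[OF db] degree_frob])
  also have "frob ?s (smult g b) = smult (- g) (frob ?s b)" using frob_smult[OF db] gamma by simp
  also have "frob ?s (frob ?s (bar a)) = bar a" by (rule frob_half_frob_half[OF assms(1) bar_inRn[OF a]])
  finally have L: "form_gamma n q t g b a = - trace (smult g (rmul n (bar a) (frob ?s b)))"
    by (simp add: rmul_smult_left rmul_smult rmul_minus rmul_comm trace_uminus)
  have "bar (form_gamma n q t g a b) = trace (bar (rmul n (smult g a) (frob ?s (bar b))))"
    unfolding form_gamma_eq_trace[OF db] by (rule bar_trace[OF degree_rmul])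
  also have "bar (rmul n (smult g a) (frob ?s (bar b))) = rmul n (smult g (bar a)) (frob ?s b)"
    using bar_rmul[OF degree_smult_less[OF da] degree_frob] bar_smult[OF da] frob_bar[OF degree_bar, of ?s b] bar_bar[OF db]
    by simp
  finally show ?thesis using L by (simp add: rmul_smult_left)
qed

lemma form_gamma_rmul_left:
  "inRn 1 u \<Longrightarrow> degree b < n \<Longrightarrow> form_gamma n q t g (rmul n u a) b = rmul n u (form_gamma n q t g a b)"
proof -
  assume u: "inRn 1 u" and b: "degree b < n"
  let ?Y = "frob (t div 2) (bar b)"
  have "rmul n (smult g (rmul n u a)) ?Y = rmul n u (rmul n (smult g a) ?Y)"
    by (simp only: rmul_smult_left rmul_smult rmul_assoc)
  then show ?thesis unfolding form_gamma_eq_trace[OF b] using trace_rmul[OF u degree_rmul] by simp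
qed

lemma form_gamma_rmul_right:
  "inRn 1 v \<Longrightarrow> degree b < n \<Longrightarrow> form_gamma n q t g a (rmul n v b) = rmul n (bar v) (form_gamma n q t g a b)"
proof -
  assume v: "inRn 1 v" and b: "degree b < n"
  have iv: "inRn 1 (bar v)" by (rule bar_inRn[OF v])
  have "frob (t div 2) (bar (rmul n v b)) = rmul n (bar v) (frob (t div 2) (bar b))"
    using bar_rmul[OF inRn_deg[OF v] b] frob_rmul[OF degree_bar degree_bar] frob_inRn_1[OF iv] by simp
  then have "rmul n (smult g a) (frob (t div 2) (bar (rmul n v b)))
      = rmul n (bar v) (rmul n (smult g a) (frob (t div 2) (bar b)))"
    by (metis rmul_assoc rmul_comm)
  then show ?thesis
    unfolding form_gamma_eq_trace[OF b] form_gamma_eq_trace[OF degree_rmul]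
    using trace_rmul[OF iv degree_rmul] by simp
qed

lemma degree_form_gamma: "degree b < n \<Longrightarrow> degree (form_gamma n q t g a (b::'a poly)) < n"
  unfolding form_gamma_eq_trace by (rule degree_trace)

lemma form_gammaH_eq: "form_gammaH n q t g th a (b::'a poly) = rmul n (th - bar th) (form_gamma n q t g a b)"
  unfolding form_gammaH_def bar_def ..

text \<open>\<open>\<chi> = \<theta> - \<tau>_(1,-1)(\<theta>)\<close> is skew, which turns the skew-symmetry of \<open>[\<cdot>,\<cdot>]_\<gamma>\<close>
  into the symmetry \<open>[y,x] = \<tau>_(1,-1)[x,y]\<close>.\<close>
lemma form_gammaH_swap:
  assumes "even t" and "g ^ (q ^ (t div 2)) = - g" and th: "inRn 1 th"
    and a: "inRn t a" and b: "inRn t b"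
  shows "form_gammaH n q t g th b a = bar (form_gammaH n q t g th a b)"
proof -
  have chi: "inRn 1 (th - bar th)" by (rule inRn_diff[OF th bar_inRn[OF th]])
  have bar_chi: "bar (th - bar th) = - (th - bar th)"
    using bar_bar[OF inRn_deg[OF th]] by (simp add: bar_diff)
  have "bar (form_gammaH n q t g th a b) = rmul n (bar (th - bar th)) (bar (form_gamma n q t g a b))"
    unfolding form_gammaH_eq by (rule bar_rmul[OF inRn_deg[OF chi] degree_form_gamma[OF inRn_deg[OF b]]])
  also have "\<dots> = rmul n (th - bar th) (form_gamma n q t g b a)"
    unfolding bar_chi form_gamma_swap[OF assms(1,2) a b] by (simp only: rmul_minus rmul_minus_left minus_minus)
  finally show ?thesis unfolding form_gammaH_eq by simp
qed

lemma form_gammaH_rmul_left: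
  "inRn 1 u \<Longrightarrow> degree b < n \<Longrightarrow> form_gammaH n q t g th (rmul n u a) b = rmul n u (form_gammaH n q t g th a b)"
  unfolding form_gammaH_eq by (simp add: form_gamma_rmul_left) (metis rmul_assoc rmul_comm)

lemma form_gammaH_rmul_right:
  "inRn 1 v \<Longrightarrow> degree b < n \<Longrightarrow> form_gammaH n q t g th a (rmul n v b) = rmul n (bar v) (form_gammaH n q t g th a b)"
  unfolding form_gammaH_eq by (simp add: form_gamma_rmul_right) (metis rmul_assoc rmul_comm)

end

section \<open>Hermitian pairings of \<open>J_l\<close> with \<open>J_(-l)\<close>\<close>

locale coset_pair = cyclic_setup +
  fixes l :: nat
  assumes cyc_coset_neq: "cyc_coset n q l \<noteq> cyc_coset n q (negmod n l)"
begin

abbreviation Jsum :: "'a poly set" where "Jsum \<equiv> dsum (J l) (J (negmod n l))"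

lemma rmul_J_supported_negmod: "a \<in> J l \<Longrightarrow> supported (negmod n l) y \<Longrightarrow> rmul n a y = 0"
  by (rule rmul_supported_disjoint[OF cyc_coset_neq J_supported])

lemma rmul_J_negmod_supported: "b \<in> J (negmod n l) \<Longrightarrow> supported l y \<Longrightarrow> rmul n b y = 0"
  by (rule rmul_supported_disjoint[OF cyc_coset_neq[symmetric] J_supported])

lemma rmul_J_J_negmod: "a \<in> J l \<Longrightarrow> b \<in> J (negmod n l) \<Longrightarrow> rmul n a b = 0"
  by (rule rmul_J_supported_negmod[OF _ J_supported])

lemma J_add_eq_0_iff:
  assumes "a \<in> J l" and "b \<in> J (negmod n l)"
  shows "a + b = 0 \<longleftrightarrow> a = 0 \<and> b = 0"
proof -
  have "rmul n (idem l) (a + b) = a"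
    using rmul_J_J_negmod[OF K_subset_J[OF idem_in_K] assms(2)] rmul_idem_J[OF assms(1)]
    by (simp add: rmul_add)
  show ?thesis
  proof
    assume "a + b = 0"
    then have "a = 0" using \<open>rmul n (idem l) (a + b) = a\<close> by (simp add: rmul_0)
    with \<open>a + b = 0\<close> show "a = 0 \<and> b = 0" by simp
  qed simp
qed

lemma rmul_add_add:
  assumes "u \<in> K l" "v \<in> K (negmod n l)" "a \<in> J l" "b \<in> J (negmod n l)"
  shows "rmul n (u + v) (a + b) = rmul n u a + rmul n v b"
  using rmul_J_J_negmod[OF K_subset_J[OF assms(1)] assms(4)]
    rmul_J_J_negmod[OF assms(3) K_subset_J[OF assms(2)]]
  by (simp add: rmul_add rmul_add_left rmul_comm[of n v a])

lemma rmul_idem_add_idem: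
  assumes "x \<in> Jsum" shows "rmul n (idem l + idem (negmod n l)) x = x"
proof -
  obtain a b where "x = a + b" "a \<in> J l" "b \<in> J (negmod n l)" using assms unfolding dsum_def by blast
  then show ?thesis using rmul_add_add[OF idem_in_K idem_in_K] rmul_idem_J by simp
qed

end

locale hermitian_pairing = coset_pair +
  fixes B :: "'a poly \<Rightarrow> 'a poly \<Rightarrow> 'a poly"
  assumes add_left: "B (x + y) z = B x z + B y z"
    and add_right: "B x (y + z) = B x y + B x z"
    and J_isotropic: "a \<in> J l \<Longrightarrow> a' \<in> J l \<Longrightarrow> B a a' = 0"
    and J_negmod_isotropic: "b \<in> J (negmod n l) \<Longrightarrow> b' \<in> J (negmod n l) \<Longrightarrow> B b b' = 0"
    and in_K: "a \<in> J l \<Longrightarrow> b \<in> J (negmod n l) \<Longrightarrow> B a b \<in> K l"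
    and swap: "a \<in> J l \<Longrightarrow> b \<in> J (negmod n l) \<Longrightarrow> B b a = bar (B a b)"
    and rmul_left: "u \<in> K l \<Longrightarrow> a \<in> J l \<Longrightarrow> b \<in> J (negmod n l) \<Longrightarrow>
      B (rmul n u a) b = rmul n u (B a b)"
    and rmul_right: "v \<in> K (negmod n l) \<Longrightarrow> a \<in> J l \<Longrightarrow> b \<in> J (negmod n l) \<Longrightarrow>
      B a (rmul n v b) = rmul n (bar v) (B a b)"
begin

lemma zero_left: "B 0 y = 0"
proof -
  have "B (0 + 0) y = B 0 y + B 0 y" by (rule add_left)
  then have "B 0 y + B 0 y = B 0 y + 0" by simp
  then show ?thesis by (rule add_left_imp_eq)
qed

lemma zero_right: "B x 0 = 0"
proof -
  have "B x (0 + 0) = B x 0 + B x 0" by (rule add_right)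
  then have "B x 0 + B x 0 = B x 0 + 0" by simp
  then show ?thesis by (rule add_left_imp_eq)
qed

lemma in_K_negmod: "a \<in> J l \<Longrightarrow> b \<in> J (negmod n l) \<Longrightarrow> B b a \<in> K (negmod n l)"
  using swap bar_K in_K by simp

lemma add_add:
  "a \<in> J l \<Longrightarrow> a' \<in> J l \<Longrightarrow> b \<in> J (negmod n l) \<Longrightarrow> b' \<in> J (negmod n l) \<Longrightarrow>
    B (a + b) (a' + b') = B a b' + B b a'"
  by (simp add: add_left add_right J_isotropic J_negmod_isotropic)

lemma isotropic_add_iff:
  assumes "a \<in> J l" and "b \<in> J (negmod n l)"
  shows "B (a + b) (a + b) = 0 \<longleftrightarrow> B a b = 0"
proof -
  have "B (a + b) (a + b) = B a b + B b a" by (rule add_add[OF assms(1) assms(1) assms(2) assms(2)])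
  moreover have "B b a = bar (B a b)" by (rule swap[OF assms])
  ultimately show ?thesis
    using J_add_eq_0_iff[OF K_subset_J[OF in_K[OF assms]] K_subset_J[OF in_K_negmod[OF assms]]]
    by (auto simp: bar_zero)
qed

lemma rmul_left_negmod:
  assumes v: "v \<in> K (negmod n l)" and a: "a \<in> J l" and b: "b \<in> J (negmod n l)"
  shows "B (rmul n v b) a = rmul n v (B b a)"
proof -
  have vb: "rmul n v b \<in> J (negmod n l)" by (rule J_rmul[OF inRn_mono[OF K_inRn[OF v]] b])
  have "B (rmul n v b) a = bar (rmul n (bar v) (B a b))" using swap[OF a vb] rmul_right[OF v a b] by simp
  also have "\<dots> = rmul n (bar (bar v)) (bar (B a b))"
    by (rule bar_rmul[OF degree_bar degree_K[OF in_K[OF a b]]])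
  finally show ?thesis using bar_bar[OF degree_K[OF v]] swap[OF a b] by simp
qed

lemma swap_Jsum: "x \<in> Jsum \<Longrightarrow> y \<in> Jsum \<Longrightarrow> B y x = bar (B x y)"
proof (unfold dsum_def, elim CollectE exE conjE)
  fix a b c d assume x: "x = a + b" and a: "a \<in> J l" and b: "b \<in> J (negmod n l)"
    and y: "y = c + d" and c: "c \<in> J l" and d: "d \<in> J (negmod n l)"
  have "B y x = B c b + B d a" unfolding x y by (rule add_add[OF c a d b])
  also have "\<dots> = bar (B b c) + bar (B a d)"
    using swap[OF a d] swap[OF c b] bar_bar[OF degree_K[OF in_K[OF c b]]] by simp
  also have "\<dots> = bar (B x y)" unfolding x y by (simp add: add_add[OF a c b d] bar_add)
  finally show "B y x = bar (B x y)" .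
qed

lemma rmul_left_Jsum:
  assumes u: "u \<in> K l" and v: "v \<in> K (negmod n l)" and "x \<in> Jsum" and "y \<in> Jsum"
  shows "B (rmul n (u + v) x) y = rmul n (u + v) (B x y)"
proof -
  obtain a b c d where x: "x = a + b" and a: "a \<in> J l" and b: "b \<in> J (negmod n l)"
    and y: "y = c + d" and c: "c \<in> J l" and d: "d \<in> J (negmod n l)"
    using assms(3,4) unfolding dsum_def by blast
  have ua: "rmul n u a \<in> J l" by (rule J_rmul[OF inRn_mono[OF K_inRn[OF u]] a])
  have vb: "rmul n v b \<in> J (negmod n l)" by (rule J_rmul[OF inRn_mono[OF K_inRn[OF v]] b])
  have "B (rmul n (u + v) x) y = rmul n u (B a d) + rmul n v (B b c)"
    unfolding x y rmul_add_add[OF u v a b] add_add[OF ua c vb d]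
    using rmul_left[OF u a d] rmul_left_negmod[OF v c b] by simp
  also have "\<dots> = rmul n (u + v) (B a d + B b c)"
    by (rule rmul_add_add[OF u v K_subset_J[OF in_K[OF a d]] K_subset_J[OF in_K_negmod[OF c b]], symmetric])
  also have "B a d + B b c = B x y" unfolding x y by (rule add_add[OF a c b d, symmetric])
  finally show ?thesis .
qed

lemma ex_orthogonal:
  assumes "ksubspace n (K (negmod n l)) (J (negmod n l)) A" and "kdim n (K (negmod n l)) A d"
    and "2 \<le> d" and a: "a \<in> J l"
  shows "\<exists>b\<in>A. b \<noteq> 0 \<and> B a b = 0"
proof -
  let ?m = "negmod n l"
  obtain \<beta>0 \<beta>1 where \<beta>: "\<beta>0 \<in> A" "\<beta>1 \<in> A" "\<beta>0 \<noteq> 0"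
    and indep: "\<And>c0 c1. c0 \<in> K ?m \<Longrightarrow> c1 \<in> K ?m \<Longrightarrow> rmul n c0 \<beta>0 + rmul n c1 \<beta>1 = 0 \<Longrightarrow> c0 = 0 \<and> c1 = 0"
    using kdim_obtains_independent_pair[OF assms(2,3)] by blast
  have \<beta>J: "\<beta>0 \<in> J ?m" "\<beta>1 \<in> J ?m" using \<beta> assms(1) unfolding ksubspace_def by auto
  let ?s0 = "B a \<beta>0" and ?s1 = "B a \<beta>1"
  have s1: "?s1 \<in> K l" by (rule in_K[OF a \<beta>J(2)])
  show ?thesis
  proof (cases "?s0 = 0")
    case True then show ?thesis using \<beta> by blast
  next
    case False
    obtain z where z: "z \<in> K l" "rmul n z ?s0 = idem l" using K_inverse[OF in_K[OF a \<beta>J(1)] False] by blast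
    let ?w = "- rmul n ?s1 z"
    have w: "?w \<in> K l" by (rule K_uminus[OF K_rmul[OF K_inRn[OF s1] z(1)]])
    let ?b = "rmul n (bar ?w) \<beta>0 + rmul n (idem ?m) \<beta>1"
    have "?b \<in> A" using assms(1) bar_K[OF w] idem_in_K \<beta> unfolding ksubspace_def by blast
    moreover have "?b \<noteq> 0" using indep[OF bar_K[OF w] idem_in_K] idem_neq_0 by blast
    moreover have "B a ?b = 0"
    proof -
      have "B a ?b = rmul n ?w ?s0 + rmul n (idem l) ?s1"
        using add_right rmul_right[OF bar_K[OF w] a \<beta>J(1)] rmul_right[OF idem_in_K a \<beta>J(2)]
          bar_bar[OF degree_K[OF w]] bar_idem_negmod by simp
      also have "rmul n ?w ?s0 = - rmul n ?s1 (rmul n z ?s0)" by (simp add: rmul_minus_left rmul_assoc)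
      also have "rmul n ?s1 (rmul n z ?s0) = ?s1"
        unfolding z(2) using rmul_idem_J[OF K_subset_J[OF s1]] by (simp add: rmul_comm)
      also have "rmul n (idem l) ?s1 = ?s1" by (rule rmul_idem_J[OF K_subset_J[OF s1]])
      finally show ?thesis by simp
    qed
    ultimately show ?thesis by blast
  qed
qed

text \<open>The Gram matrix of a hyperbolic pair is the identity of \<open>K_l \<oplus> K_(-l)\<close> off the
  diagonal, so \<open>[w,x]\<close> and \<open>[w,y]\<close> recover the coefficients of \<open>w = s x + s' y\<close>.\<close>
lemma nondeg_gen_submod:
  assumes "Ah \<subseteq> J l" and "Amh \<subseteq> J (negmod n l)"
    and hp: "hyperbolic_pair n B (K l) (K (negmod n l)) Ah Amh x y"
  shows "nondeg B (gen_submod n (K l) (K (negmod n l)) x y)"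
proof -
  let ?G = "gen_submod n (K l) (K (negmod n l)) x y" and ?e = "idem l + idem (negmod n l)"
  have x: "x \<in> Jsum" and y: "y \<in> Jsum"
    using hp assms(1,2) unfolding hyperbolic_pair_def nontrivial_def by (blast intro: dsumI)+
  have Bxx: "B x x = 0" and Byy: "B y y = 0" and Bxy: "B x y = ?e"
    using hp unfolding hyperbolic_pair_def isotropic_def ident_K by auto
  have Byx: "B y x = ?e"
    using swap_Jsum[OF x y] Bxy bar_idem bar_idem_negmod by (simp add: bar_add add.commute)
  have coeff: "rmul n (u + v) ?e = u + v" if "u \<in> K l" "v \<in> K (negmod n l)" for u v
  proof -
    have "u + v \<in> Jsum" using that K_subset_J by (blast intro: dsumI)
    then show ?thesis using rmul_idem_add_idem by (simp add: rmul_comm)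
  qed
  have "x = rmul n (idem l + idem (negmod n l)) x + rmul n (0 + 0) y"
    using rmul_idem_add_idem[OF x] by (simp add: rmul_0_left)
  then have xG: "x \<in> ?G" unfolding gen_submod_def using idem_in_K K_zero by blast
  have "y = rmul n (0 + 0) x + rmul n (idem l + idem (negmod n l)) y"
    using rmul_idem_add_idem[OF y] by (simp add: rmul_0_left)
  then have yG: "y \<in> ?G" unfolding gen_submod_def using idem_in_K K_zero by blast
  show ?thesis unfolding nondeg_def
  proof (intro ballI impI)
    fix w assume "w \<in> ?G" and "w \<noteq> 0"
    then obtain u v u' v' where uv: "u \<in> K l" "v \<in> K (negmod n l)" "u' \<in> K l" "v' \<in> K (negmod n l)"
      and w: "w = rmul n (u + v) x + rmul n (u' + v') y"
      unfolding gen_submod_def by blast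
    have Bwx: "B w x = u' + v'"
      unfolding w add_left rmul_left_Jsum[OF uv(1,2) x x] rmul_left_Jsum[OF uv(3,4) y x] Bxx Byx
      using coeff[OF uv(3,4)] by (simp add: rmul_0)
    have Bwy: "B w y = u + v"
      unfolding w add_left rmul_left_Jsum[OF uv(1,2) x y] rmul_left_Jsum[OF uv(3,4) y y] Bxy Byy
      using coeff[OF uv(1,2)] by (simp add: rmul_0)
    show "\<exists>z\<in>?G. B w z \<noteq> 0"
    proof (rule ccontr)
      assume "\<not> (\<exists>z\<in>?G. B w z \<noteq> 0)"
      then have "u' + v' = 0" "u + v = 0" using xG yG Bwx Bwy by auto
      then have "w = 0" unfolding w by (simp add: rmul_0_left)
      with \<open>w \<noteq> 0\<close> show False ..
    qed
  qed
qed

end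

context coset_pair
begin

lemma hermitian_pairing_form0: "hermitian_pairing \<eta> k q n t l (form0 n q t)"
proof (intro hermitian_pairing.intro coset_pair_axioms hermitian_pairing_axioms.intro)
  fix x y z :: "'a poly"
  show "form0 n q t (x + y) z = form0 n q t x z + form0 n q t y z" by (rule form0_add_left)
  show "form0 n q t x (y + z) = form0 n q t x y + form0 n q t x z" by (rule form0_add_right)
next
  fix a a' assume "a \<in> J l" "a' \<in> J l"
  then show "form0 n q t a a' = 0"
    unfolding form0_eq_trace using rmul_J_supported_negmod supported_bar_J trace_zero by metis
next
  fix b b' assume "b \<in> J (negmod n l)" "b' \<in> J (negmod n l)"
  then show "form0 n q t b b' = 0"
    unfolding form0_eq_trace using rmul_J_negmod_supported supported_bar_J_negmod trace_zero by metis
next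
  fix a b assume a: "a \<in> J l" and b: "b \<in> J (negmod n l)"
  show "form0 n q t a b \<in> K l" unfolding form0_eq_trace
    by (rule K_I_supported[OF trace_inRn[OF inRn_rmul[OF J_inRn[OF a] bar_inRn[OF J_inRn[OF b]]]]
          supported_trace[OF degree_rmul supported_rmul[OF J_supported[OF a]]]])
  show "form0 n q t b a = bar (form0 n q t a b)" by (rule form0_swap[OF degree_J[OF a] degree_J[OF b]])
next
  fix u a b assume "u \<in> K l" "a \<in> J l" "b \<in> J (negmod n l)"
  then show "form0 n q t (rmul n u a) b = rmul n u (form0 n q t a b)" using form0_rmul_left K_inRn by blast
next
  fix v a b assume "v \<in> K (negmod n l)" "a \<in> J l" "b \<in> J (negmod n l)"
  then show "form0 n q t a (rmul n v b) = rmul n (bar v) (form0 n q t a b)"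
    using form0_rmul_right K_inRn degree_J by blast
qed

lemma hermitian_pairing_form_star: "hermitian_pairing \<eta> k q n t l (form_star n q t)"
proof (intro hermitian_pairing.intro coset_pair_axioms hermitian_pairing_axioms.intro)
  fix x y z :: "'a poly"
  show "form_star n q t (x + y) z = form_star n q t x z + form_star n q t y z" by (rule form_star_add_left)
  show "form_star n q t x (y + z) = form_star n q t x y + form_star n q t x z" by (rule form_star_add_right)
next
  fix a a' assume a: "a \<in> J l" and a': "a' \<in> J l"
  have "supported (negmod n l) (trace (bar a') - bar a')"
    by (rule supported_diff[OF supported_trace[OF degree_bar supported_bar_J[OF a']] supported_bar_J[OF a']])
  then show "form_star n q t a a' = 0" unfolding form_star_eq_trace[OF degree_J[OF a']]
    using rmul_J_supported_negmod[OF a] trace_zero by simp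
next
  fix b b' assume b: "b \<in> J (negmod n l)" and b': "b' \<in> J (negmod n l)"
  have "supported l (trace (bar b') - bar b')"
    by (rule supported_diff[OF supported_trace[OF degree_bar supported_bar_J_negmod[OF b']] supported_bar_J_negmod[OF b']])
  then show "form_star n q t b b' = 0" unfolding form_star_eq_trace[OF degree_J[OF b']]
    using rmul_J_negmod_supported[OF b] trace_zero by simp
next
  fix a b assume a: "a \<in> J l" and b: "b \<in> J (negmod n l)"
  have "inRn t (trace (bar b) - bar b)"
    by (rule inRn_diff[OF inRn_mono[OF trace_inRn[OF bar_inRn[OF J_inRn[OF b]]]] bar_inRn[OF J_inRn[OF b]]])
  then show "form_star n q t a b \<in> K l" unfolding form_star_eq_trace[OF degree_J[OF b]]
    by (intro K_I_supported[OF trace_inRn[OF inRn_rmul[OF J_inRn[OF a]]]]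
          supported_trace[OF degree_rmul supported_rmul[OF J_supported[OF a]]])
  show "form_star n q t b a = bar (form_star n q t a b)" by (rule form_star_swap[OF J_inRn[OF a] J_inRn[OF b]])
next
  fix u a b assume "u \<in> K l" "a \<in> J l" "b \<in> J (negmod n l)"
  then show "form_star n q t (rmul n u a) b = rmul n u (form_star n q t a b)"
    using form_star_rmul_left K_inRn degree_J by blast
next
  fix v a b assume "v \<in> K (negmod n l)" "a \<in> J l" "b \<in> J (negmod n l)"
  then show "form_star n q t a (rmul n v b) = rmul n (bar v) (form_star n q t a b)"
    using form_star_rmul_right K_inRn degree_J by blast
qed

lemma hermitian_pairing_form_gammaH:
  assumes ev: "even t" and gamma: "g ^ (q ^ (t div 2)) = - g" and th: "th \<in> K l"
  shows "hermitian_pairing \<eta> k q n t l (form_gammaH n q t g th)"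
proof (intro hermitian_pairing.intro coset_pair_axioms hermitian_pairing_axioms.intro)
  fix x y z :: "'a poly"
  show "form_gammaH n q t g th (x + y) z = form_gammaH n q t g th x z + form_gammaH n q t g th y z"
    by (rule form_gammaH_add_left)
  show "form_gammaH n q t g th x (y + z) = form_gammaH n q t g th x y + form_gammaH n q t g th x z"
    by (rule form_gammaH_add_right)
next
  fix a a' assume a: "a \<in> J l" and a': "a' \<in> J l"
  have "supported (negmod n l) (frob (t div 2) (bar a'))" by (rule supported_frob[OF degree_bar supported_bar_J[OF a']])
  then show "form_gammaH n q t g th a a' = 0"
    unfolding form_gammaH_eq form_gamma_eq_trace[OF degree_J[OF a']]
    using rmul_J_supported_negmod[OF a] by (simp add: rmul_smult_left trace_zero rmul_0)
next
  fix b b' assume b: "b \<in> J (negmod n l)" and b': "b' \<in> J (negmod n l)"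
  have "supported l (frob (t div 2) (bar b'))" by (rule supported_frob[OF degree_bar supported_bar_J_negmod[OF b']])
  then show "form_gammaH n q t g th b b' = 0"
    unfolding form_gammaH_eq form_gamma_eq_trace[OF degree_J[OF b']]
    using rmul_J_negmod_supported[OF b] by (simp add: rmul_smult_left trace_zero rmul_0)
next
  fix a b assume a: "a \<in> J l" and b: "b \<in> J (negmod n l)"
  have "inRn t (rmul n (smult g a) (frob (t div 2) (bar b)))"
    by (rule inRn_rmul[OF inRn_smult[OF gamma_in_subF[OF ev gamma] J_inRn[OF a]] frob_inRn[OF bar_inRn[OF J_inRn[OF b]]]])
  then have "form_gamma n q t g a b \<in> K l" unfolding form_gamma_eq_trace[OF degree_J[OF b]]
    by (intro K_I_supported[OF trace_inRn]
          supported_trace[OF degree_rmul supported_rmul[OF supported_smult[OF J_supported[OF a]]]])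
  moreover have "inRn 1 (th - bar th)" by (rule inRn_diff[OF K_inRn[OF th] bar_inRn[OF K_inRn[OF th]]])
  ultimately show "form_gammaH n q t g th a b \<in> K l" unfolding form_gammaH_eq by (rule K_rmul[rotated])
  show "form_gammaH n q t g th b a = bar (form_gammaH n q t g th a b)"
    by (rule form_gammaH_swap[OF ev gamma K_inRn[OF th] J_inRn[OF a] J_inRn[OF b]])
next
  fix u a b assume "u \<in> K l" "a \<in> J l" "b \<in> J (negmod n l)"
  then show "form_gammaH n q t g th (rmul n u a) b = rmul n u (form_gammaH n q t g th a b)"
    using form_gammaH_rmul_left K_inRn degree_J by blast
next
  fix v a b assume "v \<in> K (negmod n l)" "a \<in> J l" "b \<in> J (negmod n l)"
  then show "form_gammaH n q t g th a (rmul n v b) = rmul n (bar v) (form_gammaH n q t g th a b)"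
    using form_gammaH_rmul_right K_inRn degree_J by blast
qed

lemma hermitian_pairing_form_delta:
  assumes "t \<in> Tset \<delta> p"
    and "\<delta> = DGammaH \<Longrightarrow> \<gamma> + \<gamma> ^ (q ^ (2 ^ (multiplicity 2 t - 1))) = 0 \<and> \<theta> \<in> K l"
  shows "hermitian_pairing \<eta> k q n t l (form_delta \<delta> n q t \<gamma> \<theta>)"
proof (cases \<delta>)
  case DStar then show ?thesis using hermitian_pairing_form_star by (simp add: form_delta_def)
next
  case DZero then show ?thesis using hermitian_pairing_form0 by (simp add: form_delta_def)
next
  case DGammaH
  then have "even t" using assms(1) by (simp add: Tset_def)
  with DGammaH show ?thesis
    using hermitian_pairing_form_gammaH gamma_power_half assms(2) by (simp add: form_delta_def)
qed

end

section \<open>Non-degenerate submodules\<close>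

locale nondegenerate_pair = hermitian_pairing +
  fixes Ah Amh :: "'a poly set" and dh dmh :: nat
  assumes subspace_h: "ksubspace n (K l) (J l) Ah" and kdim_h: "kdim n (K l) Ah dh"
    and subspace_mh: "ksubspace n (K (negmod n l)) (J (negmod n l)) Amh"
    and kdim_mh: "kdim n (K (negmod n l)) Amh dmh"
    and nondeg_dsum: "nondeg B (dsum Ah Amh)"
begin

lemma Ah_J: "a \<in> Ah \<Longrightarrow> a \<in> J l"
  using subspace_h unfolding ksubspace_def by blast

lemma Amh_J: "b \<in> Amh \<Longrightarrow> b \<in> J (negmod n l)"
  using subspace_mh unfolding ksubspace_def by blast

lemma ex_pairing_right:
  assumes a: "a \<in> Ah" and "a \<noteq> 0"
  shows "\<exists>b\<in>Amh. B a b \<noteq> 0"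
proof -
  have "0 \<in> Amh" using subspace_mh unfolding ksubspace_def by blast
  then have "a + 0 \<in> dsum Ah Amh" using a by (rule dsumI[rotated])
  then obtain y where "y \<in> dsum Ah Amh" "B a y \<noteq> 0" using nondeg_dsum assms(2) unfolding nondeg_def by auto
  then obtain a' b where ab: "a' \<in> Ah" "b \<in> Amh" "B (a + 0) (a' + b) \<noteq> 0" unfolding dsum_def by auto
  have "B (a + 0) (a' + b) = B a b"
    using add_add[OF Ah_J[OF a] Ah_J[OF ab(1)] K_subset_J[OF K_zero] Amh_J[OF ab(2)]] zero_left by simp
  then show ?thesis using ab by auto
qed

lemma ex_pairing_left:
  assumes b: "b \<in> Amh" and "b \<noteq> 0"
  shows "\<exists>a\<in>Ah. B a b \<noteq> 0"
proof -
  have "0 \<in> Ah" using subspace_h unfolding ksubspace_def by blast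
  then have "0 + b \<in> dsum Ah Amh" using b by (rule dsumI)
  then obtain y where "y \<in> dsum Ah Amh" "B b y \<noteq> 0" using nondeg_dsum assms(2) unfolding nondeg_def by auto
  then obtain a b' where ab: "a \<in> Ah" "b' \<in> Amh" "B (0 + b) (a + b') \<noteq> 0" unfolding dsum_def by auto
  have "B (0 + b) (a + b') = bar (B a b)"
    using add_add[OF K_subset_J[OF K_zero] Ah_J[OF ab(1)] Amh_J[OF b] Amh_J[OF ab(2)]]
      swap[OF Ah_J[OF ab(1)] Amh_J[OF b]] zero_left by simp
  then have "B a b \<noteq> 0" using ab(3) bar_zero by force
  with ab(1) show ?thesis by blast
qed

lemma ex_dual_right:
  assumes a: "a \<in> Ah" and "a \<noteq> 0"
  shows "\<exists>b\<in>Amh. B a b = idem l"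
proof -
  obtain b where b: "b \<in> Amh" "B a b \<noteq> 0" using ex_pairing_right[OF assms] by blast
  have aJ: "a \<in> J l" and bJ: "b \<in> J (negmod n l)" using a b Ah_J Amh_J by auto
  obtain z where z: "z \<in> K l" "rmul n z (B a b) = idem l" using K_inverse[OF in_K[OF aJ bJ] b(2)] by blast
  have "rmul n (bar z) b \<in> Amh" using bar_K[OF z(1)] b(1) subspace_mh unfolding ksubspace_def by blast
  moreover have "B a (rmul n (bar z) b) = idem l"
    using rmul_right[OF bar_K[OF z(1)] aJ bJ] bar_bar[OF degree_K[OF z(1)]] z(2) by simp
  ultimately show ?thesis by blast
qed

lemma ex_dual_left:
  assumes b: "b \<in> Amh" and "b \<noteq> 0"
  shows "\<exists>a\<in>Ah. B a b = idem l"
proof -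
  obtain a where a: "a \<in> Ah" "B a b \<noteq> 0" using ex_pairing_left[OF assms] by blast
  have aJ: "a \<in> J l" and bJ: "b \<in> J (negmod n l)" using a b Ah_J Amh_J by auto
  obtain z where z: "z \<in> K l" "rmul n z (B a b) = idem l" using K_inverse[OF in_K[OF aJ bJ] a(2)] by blast
  have "rmul n z a \<in> Ah" using z(1) a(1) subspace_h unfolding ksubspace_def by blast
  moreover have "B (rmul n z a) b = idem l" using rmul_left[OF z(1) aJ bJ] z(2) by simp
  ultimately show ?thesis by blast
qed

lemma nontrivial_isotropic_iff:
  "nontrivial Ah Amh x \<and> isotropic B x \<longleftrightarrow> (\<exists>a\<in>Ah. \<exists>b\<in>Amh. x = a + b \<and> a \<noteq> 0 \<and> b \<noteq> 0 \<and> B a b = 0)"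
proof
  assume "nontrivial Ah Amh x \<and> isotropic B x"
  then obtain a b where ab: "a \<in> Ah" "b \<in> Amh" "x = a + b" "a \<noteq> 0" "b \<noteq> 0" and "B x x = 0"
    unfolding nontrivial_def isotropic_def by blast
  then have "B a b = 0" using isotropic_add_iff[OF Ah_J[OF ab(1)] Amh_J[OF ab(2)]] by simp
  then show "\<exists>a\<in>Ah. \<exists>b\<in>Amh. x = a + b \<and> a \<noteq> 0 \<and> b \<noteq> 0 \<and> B a b = 0" using ab by blast
next
  assume "\<exists>a\<in>Ah. \<exists>b\<in>Amh. x = a + b \<and> a \<noteq> 0 \<and> b \<noteq> 0 \<and> B a b = 0"
  then obtain a b where ab: "a \<in> Ah" "b \<in> Amh" "x = a + b" "a \<noteq> 0" "b \<noteq> 0" "B a b = 0" by blast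
  have "x \<noteq> 0" using J_add_eq_0_iff[OF Ah_J[OF ab(1)] Amh_J[OF ab(2)]] ab(3,4) by simp
  moreover have "B x x = 0" using isotropic_add_iff[OF Ah_J[OF ab(1)] Amh_J[OF ab(2)]] ab(3,6) by simp
  ultimately show "nontrivial Ah Amh x \<and> isotropic B x"
    unfolding nontrivial_def isotropic_def using ab(1-5) by blast
qed

lemma no_nontrivial_isotropic:
  assumes "dh = 1 \<or> dmh = 1"
  shows "\<not> (\<exists>x\<in>dsum Ah Amh. nontrivial Ah Amh x \<and> isotropic B x)"
proof
  assume "\<exists>x\<in>dsum Ah Amh. nontrivial Ah Amh x \<and> isotropic B x"
  then obtain a b where a: "a \<in> Ah" "a \<noteq> 0" and b: "b \<in> Amh" "b \<noteq> 0" and ab: "B a b = 0"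
    using nontrivial_isotropic_iff by blast
  have aJ: "a \<in> J l" and bJ: "b \<in> J (negmod n l)" using a b Ah_J Amh_J by auto
  consider "dh = 1" | "dmh = 1" using assms by blast
  then show False
  proof cases
    case 1
    have "B a' b = 0" if "a' \<in> Ah" for a'
      using kdim_1_multiple[OF subspace_h kdim_h[unfolded 1] a(1,2) that] rmul_left aJ bJ ab rmul_0 by auto
    then show False using ex_pairing_left[OF b] by blast
  next
    case 2
    have "B a b' = 0" if "b' \<in> Amh" for b'
      using kdim_1_multiple[OF subspace_mh kdim_mh[unfolded 2] b(1,2) that] rmul_right aJ bJ ab rmul_0 by auto
    then show False using ex_pairing_right[OF a] by blast
  qed
qed

lemma ex_orthogonal_pair:
  assumes "2 \<le> dh" and "2 \<le> dmh"
  obtains a b where "a \<in> Ah" "b \<in> Amh" "a \<noteq> 0" "b \<noteq> 0" "B a b = 0"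
proof -
  obtain a where "a \<in> Ah" "a \<noteq> 0" using kdim_obtains_independent_pair[OF kdim_h assms(1)] by metis
  moreover obtain b where "b \<in> Amh" "b \<noteq> 0" "B a b = 0"
    using ex_orthogonal[OF subspace_mh kdim_mh assms(2) Ah_J[OF \<open>a \<in> Ah\<close>]] by blast
  ultimately show thesis using that by blast
qed

lemma ex_nontrivial_isotropic:
  assumes "2 \<le> dh" and "2 \<le> dmh"
  shows "\<exists>x\<in>dsum Ah Amh. nontrivial Ah Amh x \<and> isotropic B x"
proof -
  obtain a b where "a \<in> Ah" "b \<in> Amh" "a \<noteq> 0" "b \<noteq> 0" "B a b = 0"
    using ex_orthogonal_pair[OF assms] by blast
  then show ?thesis using nontrivial_isotropic_iff dsumI by blast
qed

text \<open>Complete the isotropic \<open>a + b\<close> by a dual vector \<open>a' + b'\<close> and make \<open>a'\<close> orthogonal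
  to \<open>b'\<close> by subtracting the appropriate multiple of \<open>a\<close>.\<close>
lemma ex_hyperbolic_pair:
  assumes "2 \<le> dh" and "2 \<le> dmh"
  shows "\<exists>x\<in>dsum Ah Amh. \<exists>y\<in>dsum Ah Amh. hyperbolic_pair n B (K l) (K (negmod n l)) Ah Amh x y"
proof -
  obtain a b where a: "a \<in> Ah" "a \<noteq> 0" and b: "b \<in> Amh" "b \<noteq> 0" and ab: "B a b = 0"
    using ex_orthogonal_pair[OF assms] by metis
  obtain b' where b': "b' \<in> Amh" "B a b' = idem l" using ex_dual_right[OF a] by blast
  obtain a' where a': "a' \<in> Ah" "B a' b = idem l" using ex_dual_left[OF b] by blast
  have J: "a \<in> J l" "a' \<in> J l" "b \<in> J (negmod n l)" "b' \<in> J (negmod n l)"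
    using a a' b b' Ah_J Amh_J by auto
  let ?u = "- B a' b'"
  have u: "?u \<in> K l" by (rule K_uminus[OF in_K[OF J(2,4)]])
  let ?a'' = "a' + rmul n ?u a"
  have a'': "?a'' \<in> Ah" using subspace_h u a'(1) a(1) unfolding ksubspace_def by blast
  have "B ?a'' b' = B a' b' + rmul n ?u (idem l)"
    using add_left rmul_left[OF u J(1,4)] b'(2) by simp
  then have a''b': "B ?a'' b' = 0" using rmul_idem_J[OF K_subset_J[OF u]] by (simp add: rmul_comm)
  have a''b: "B ?a'' b = idem l" using add_left rmul_left[OF u J(1,3)] ab a'(2) by (simp add: rmul_0)
  have "?a'' \<noteq> 0" "b' \<noteq> 0" using a''b b'(2) idem_neq_0 zero_left zero_right by auto
  then have y: "nontrivial Ah Amh (?a'' + b') \<and> isotropic B (?a'' + b')"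
    using nontrivial_isotropic_iff a'' b'(1) a''b' by blast
  have x: "nontrivial Ah Amh (a + b) \<and> isotropic B (a + b)"
    using nontrivial_isotropic_iff a b ab by blast
  have "B (a + b) (?a'' + b') = B a b' + bar (B ?a'' b)"
    using add_add[OF J(1) Ah_J[OF a''] J(3,4)] swap[OF Ah_J[OF a''] J(3)] by simp
  then have "B (a + b) (?a'' + b') = idem l + idem (negmod n l)"
    using a''b b'(2) bar_idem by simp
  then have "hyperbolic_pair n B (K l) (K (negmod n l)) Ah Amh (a + b) (?a'' + b')"
    unfolding hyperbolic_pair_def ident_K using x y by simp
  moreover have "a + b \<in> dsum Ah Amh" by (rule dsumI[OF a(1) b(1)])
  moreover have "?a'' + b' \<in> dsum Ah Amh" by (rule dsumI[OF a'' b'(1)])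
  ultimately show ?thesis by blast
qed

end

theorem lemma3p5:
  fixes \<eta> \<gamma> :: "'a::{field,finite}"
    and \<theta> :: "'a poly"
    and p k q N n t lh l r :: nat
    and \<delta> :: delta
    and Ah Amh :: "'a poly set"
  defines "Kh \<equiv> Kideal \<eta> n q lh"
    and "Kmh \<equiv> Kideal \<eta> n q (negmod n lh)"
    and "Jh \<equiv> Jideal \<eta> n q t lh"
    and "Jmh \<equiv> Jideal \<eta> n q t (negmod n lh)"
    and "B \<equiv> form_delta \<delta> n q t \<gamma> \<theta>"
  assumes "prime p" and "k \<ge> 1" and "q = p ^ k"
    and "N \<ge> 1" and "t dvd N" and "card (UNIV :: 'a set) = q ^ N"
    and "n \<ge> 1" and "coprime n q" and "t \<ge> 2"
    and "primitive_root n \<eta>"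
    and "lh < n"
    \<comment> \<open>h belongs to M: h lies in a 2-cycle of mu\<close>
    and "cyc_coset n q lh \<noteq> cyc_coset n q (negmod n lh)"
    and "t \<in> Tset \<delta> p"
    and "\<delta> = DGammaH \<Longrightarrow>
           \<gamma> \<noteq> 0 \<and> \<gamma> \<in> subF (q ^ (2 ^ multiplicity 2 t))
           \<and> \<gamma> + \<gamma> ^ (q ^ (2 ^ (multiplicity 2 t - 1))) = 0
           \<and> \<theta> \<in> Kh \<and> \<theta> \<noteq> 0"
    and "ksubspace n Kh Jh Ah" and "kdim n Kh Ah l"
    and "ksubspace n Kmh Jmh Amh" and "kdim n Kmh Amh r"
    and "nondeg B (dsum Ah Amh)"
  shows
    "((l = 1 \<or> r = 1) \<longrightarrow>
        \<not> (\<exists>x\<in>dsum Ah Amh. nontrivial Ah Amh x \<and> isotropic B x))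
     \<and> ((l \<ge> 2 \<and> r \<ge> 2) \<longrightarrow>
        (\<exists>x\<in>dsum Ah Amh. nontrivial Ah Amh x \<and> isotropic B x))
     \<and> ((l \<ge> 2 \<and> r \<ge> 2) \<longrightarrow>
        (\<exists>x\<in>dsum Ah Amh. \<exists>y\<in>dsum Ah Amh. hyperbolic_pair n B Kh Kmh Ah Amh x y))
     \<and> (\<forall>x\<in>dsum Ah Amh. \<forall>y\<in>dsum Ah Amh. hyperbolic_pair n B Kh Kmh Ah Amh x y
          \<longrightarrow> nondeg B (gen_submod n Kh Kmh x y))"
proof -
  have "CHAR('a) = p"
    using CHAR_eq_if_card_eq_prime_power[of p "k * N"] assms(6,8,11) by (simp add: power_mult)
  then interpret coset_pair \<eta> k q n t lh
    by unfold_locales (use assms(8,12-15,17) in auto)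
  have "hermitian_pairing \<eta> k q n t lh B"
    unfolding assms(5) by (rule hermitian_pairing_form_delta) (use assms(1,18,19) in auto)
  then interpret nondegenerate_pair \<eta> k q n t lh B Ah Amh l r
    by (rule nondegenerate_pair.intro, unfold_locales) (use assms(20-24) in \<open>simp_all add: assms(1-4)\<close>)
  have "Ah \<subseteq> Jh" "Amh \<subseteq> Jmh" using Ah_J Amh_J unfolding assms(3,4) by auto
  then show ?thesis
    using no_nontrivial_isotropic ex_nontrivial_isotropic ex_hyperbolic_pair nondeg_gen_submod
    unfolding assms(1-4) by blast
qed

end
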